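(* For integers $b\ge0$ and $n\ge1$, let $ss_b(n)$ be the number of multiplex siteswaps of length $n$ using exactly $b$ balls. Then \[ ss_b(n)=\operatorname{trace}(A_b^n)-\sum_{i=0}^{b-1}\operatorname{trace}(A_i^n). \]
   Context: For an integer $b\ge 0$, an ordered partition of $b$ is a finite sequence $(q_1,\ldots,q_k)$ of positive integers summing to $b$ (for $b=0$ the only one is the empty sequence). An ordered partition $(q_1,\ldots,q_k)$ with $k\ge1$ is nontrivially embedded into an ordered partition $(r_1,\ldots,r_\ell)$ by a choice of indices $1\le i_2<\cdots<i_k\le \ell$ with $q_j\le r_{i_j}$ for $2\le j\le k$; different index tuples count as different embeddings. A card for $b$ balls is either (i) a trivial card, given by an ordered partition $q$ of $b$, with left and right partitions both $q$; or (ii) a throw card, given by ordered partitions $q$ ($k\ge1$ parts) and $r$ of $b$ together with a nontrivial embedding of $q$ into $r$, with left partition $q$ and right partition $r$. Different index tuples give different cards, and a throw card is distinct from the trivial card even when $q=r$. $A_b$ is the square matrix with rows and columns indexed by the ordered partitions of $b$ whose $(u,v)$ entry is the number of cards for $b$ balls with left partition $u$ and right partition $v$ (e.g. $A_0=(1)$, $A_1=(2)$). A multiplex siteswap of length $n$ is a sequence $(M_0,\ldots,M_{n-1})$, indexed by $t\in\mathbb{Z}/n\mathbb{Z}$, of finite multisets of positive integers ($M_t$ is the multiset of throw heights at beat $t$; empty means no throw) such that for every $t$, $|M_t|$ equals the number of pairs $(s,h)$ with $h$ an element of $M_s$ (counted with multiplicity) and $s+h\equiv t \pmod n$. Its number of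 balls is $\frac1n\sum_t\sum_{h\in M_t}h$. Sequences differing by a rotation are counted as different. *)

theory Defs
  imports "Jordan_Normal_Form.Matrix" "HOL-Library.Multiset"
begin

definition ord_parts :: "nat \<Rightarrow> nat list set" where
  "ord_parts b = {q. (\<forall>x\<in>set q. 0 < x) \<and> sum_list q = b}"

text \<open>Nontrivial embeddings of q = (q_1..q_k), k >= 1, into r = (r_1..r_l):
  index tuples (i_2,...,i_k) with 1 <= i_2 < ... < i_k <= l and q_j <= r_(i_j).
  Entry is!j of the list represents i_(j+2) (1-based), so q_(j+2) = q!(j+1),
  r_(i) = r!(i-1).\<close>
definition embeddings :: "nat list \<Rightarrow> nat list \<Rightarrow> nat list set" where
  "embeddings q r = (if q = [] then {} else
     {is. length is = length q - 1 \<and> sorted_wrt (<) is \<and>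
          (\<forall>j<length is. 1 \<le> is!j \<and> is!j \<le> length r \<and> q!(j+1) \<le> r!(is!j - 1))})"

datatype card = Trivial "nat list" | Throw "nat list" "nat list" "nat list"

fun left_part :: "card \<Rightarrow> nat list" where
  "left_part (Trivial q) = q"
| "left_part (Throw q r is) = q"

fun right_part :: "card \<Rightarrow> nat list" where
  "right_part (Trivial q) = q"
| "right_part (Throw q r is) = r"

definition cards :: "nat \<Rightarrow> card set" where
  "cards b = Trivial ` ord_parts b \<union>
     {Throw q r is | q r is. q \<in> ord_parts b \<and> r \<in> ord_parts b \<and> q \<noteq> [] \<and> is \<in> embeddings q r}"

text \<open>A fixed (arbitrary) enumeration of the ordered partitions of b, used to index
  rows and columns of A_b; the trace of powers does not depend on this choice.\<close>
definition parts_enum :: "nat \<Rightarrow> nat list list" where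
  "parts_enum b = (SOME xs. distinct xs \<and> set xs = ord_parts b)"

definition A_mat :: "nat \<Rightarrow> int mat" where
  "A_mat b = (let P = parts_enum b in
     mat (length P) (length P)
       (\<lambda>(i, j). int (card {c \<in> cards b. left_part c = P!i \<and> right_part c = P!j})))"

text \<open>Multiplex siteswaps of length n, represented as functions t \<mapsto> M_t for t < n
  (and M_t = {#} for t >= n, to make the representation canonical).\<close>
definition multiplex_siteswaps :: "nat \<Rightarrow> (nat \<Rightarrow> nat multiset) set" where
  "multiplex_siteswaps n = {M. (\<forall>t\<ge>n. M t = {#}) \<and> (\<forall>t<n. \<forall>h\<in>#M t. 0 < h) \<and>
     (\<forall>t<n. size (M t) = (\<Sum>s<n. size (filter_mset (\<lambda>h. (s + h) mod n = t) (M s))))}"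

definition num_balls :: "nat \<Rightarrow> (nat \<Rightarrow> nat multiset) \<Rightarrow> real" where
  "num_balls n M = real (\<Sum>t<n. sum_mset (M t)) / real n"

definition mat_trace :: "'a::comm_ring_1 mat \<Rightarrow> 'a" where
  "mat_trace A = (\<Sum>i<dim_row A. A $$ (i, i))"

definition ss :: "nat \<Rightarrow> nat \<Rightarrow> nat" where
  "ss b n = card {M \<in> multiplex_siteswaps n. num_balls n M = real b}"

end

theory Submission
  imports Defs
begin

text \<open>
  A closed walk of length \<open>n\<close> in the multigraph with adjacency matrix \<open>A\<^sub>b\<close> is an
  \<open>n\<close>-periodic sequence of cards. Read the left partition of a card as the state of a juggler:
  first, ordered by landing time, the numbers of balls that land together, then parts that are
  never thrown again (idle parts). A throw card throws the group landing now and its embedding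
  says which group each remaining part joins. Along a periodic card sequence the idle parts never
  change, and the remaining parts form the landing profile of a multiplex siteswap with
  \<open>i \<le> b\<close> balls. Conversely a siteswap with \<open>i\<close> balls together with a composition of
  \<open>b - i\<close> determines exactly one periodic card sequence. Writing \<open>C m\<close> for the number of
  compositions of \<open>m\<close>, this gives \<open>trace (A\<^sub>b\<^sup>n) = (\<Sum>i\<le>b. ss\<^sub>i(n) * C (b - i))\<close>, and as
  \<open>C m = (\<Sum>k<m. C k)\<close> for \<open>m \<ge> 1\<close>, the traces for \<open>i < b\<close> add up to
  \<open>\<Sum>j<b. ss\<^sub>j(n) * C (b - j)\<close>.
\<close>

section \<open>Compositions\<close>

lemma ord_parts_0: "ord_parts 0 = {[]}"
  unfolding ord_parts_def by (auto simp: sum_list_eq_0_iff) (metis all_not_in_conv less_irrefl set_empty)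

lemma ord_parts_Suc:
  "ord_parts (Suc m) = (\<Union>f\<in>{1..Suc m}. (Cons f) ` ord_parts (Suc m - f))"
proof (intro equalityI subsetI)
  fix q assume q: "q \<in> ord_parts (Suc m)"
  then obtain f r where "q = f # r" unfolding ord_parts_def by (cases q) auto
  with q have "f \<in> {1..Suc m}" "r \<in> ord_parts (Suc m - f)"
    unfolding ord_parts_def by auto
  with \<open>q = f # r\<close> show "q \<in> (\<Union>f\<in>{1..Suc m}. (Cons f) ` ord_parts (Suc m - f))"
    by blast
qed (auto simp: ord_parts_def)

lemma finite_ord_parts: "finite (ord_parts m)"
proof (induction m rule: less_induct)
  case (less m)
  then show ?case by (cases m) (auto simp: ord_parts_0 ord_parts_Suc)
qed

lemma ord_parts_nonempty: "ord_parts m \<noteq> {}"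
proof -
  have "replicate m 1 \<in> ord_parts m" by (simp add: ord_parts_def sum_list_replicate)
  then show ?thesis by blast
qed

lemma card_ord_parts_eq_sum:
  assumes "m \<ge> 1"
  shows "card (ord_parts m) = (\<Sum>k<m. card (ord_parts k))"
proof -
  obtain m' where m: "m = Suc m'" using assms by (cases m) auto
  have "card (ord_parts m) = (\<Sum>f\<in>{1..m}. card ((Cons f) ` ord_parts (m - f)))"
    unfolding m ord_parts_Suc by (rule card_UN_disjoint) (auto simp: finite_ord_parts)
  also have "\<dots> = (\<Sum>f\<in>{1..m}. card (ord_parts (m - f)))"
    by (intro sum.cong refl card_image) auto
  also have "\<dots> = (\<Sum>k<m. card (ord_parts k))"
    by (rule sum.reindex_bij_witness[where i="\<lambda>k. m - k" and j="\<lambda>f. m - f"]) auto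
  finally show ?thesis .
qed

lemma sum_convolution_collapse:
  fixes s c :: "nat \<Rightarrow> nat"
  assumes c: "\<And>m. m \<ge> 1 \<Longrightarrow> c m = (\<Sum>k<m. c k)"
  shows "(\<Sum>i<b. \<Sum>j\<le>i. s j * c (i - j)) = (\<Sum>j<b. s j * c (b - j))"
proof -
  have "(\<Sum>i<b. \<Sum>j\<le>i. s j * c (i - j)) = (\<Sum>(j, k)\<in>{(j, k). j + k < b}. s j * c k)"
    by (rule sum.triangle_reindex[symmetric])
  also have "{(j, k). j + k < b} = Sigma {..<b} (\<lambda>j. {..<b - j})" by auto
  also have "(\<Sum>(j, k)\<in>Sigma {..<b} (\<lambda>j. {..<b - j}). s j * c k) = (\<Sum>j<b. \<Sum>k<b - j. s j * c k)"
    by (rule sum.Sigma[symmetric]) auto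
  also have "\<dots> = (\<Sum>j<b. s j * c (b - j))"
    by (intro sum.cong refl) (simp add: c sum_distrib_left[symmetric])
  finally show ?thesis .
qed

section \<open>Closed walks of cards\<close>

lemma finite_embeddings: "finite (embeddings q r)"
proof (rule finite_subset)
  show "embeddings q r \<subseteq> {is. set is \<subseteq> {..length r} \<and> length is = length q - 1}"
    unfolding embeddings_def by (auto simp: in_set_conv_nth)
qed (rule finite_lists_length_eq, simp)

lemma finite_cards: "finite (cards b)"
proof (rule finite_subset)
  show "cards b \<subseteq> Trivial ` ord_parts b \<union>
      (\<Union>q\<in>ord_parts b. \<Union>r\<in>ord_parts b. (Throw q r) ` embeddings q r)"
    unfolding cards_def by auto
qed (use finite_ord_parts finite_embeddings in auto)

lemma cards_ord_parts: "c \<in> cards b \<Longrightarrow> left_part c \<in> ord_parts b \<and> right_part c \<in> ord_parts b"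
  unfolding cards_def by auto

fun card_path :: "nat list \<Rightarrow> card list \<Rightarrow> nat list \<Rightarrow> bool" where
  "card_path u [] v \<longleftrightarrow> u = v"
| "card_path u (c # cs) v \<longleftrightarrow> left_part c = u \<and> card_path (right_part c) cs v"

lemma card_path_snoc:
  "card_path u (cs @ [c]) v \<longleftrightarrow> card_path u cs (left_part c) \<and> right_part c = v"
  by (induction cs arbitrary: u) auto

lemma card_path_ends:
  "card_path u cs v \<Longrightarrow> cs \<noteq> [] \<Longrightarrow> left_part (hd cs) = u \<and> right_part (last cs) = v"
  by (induction cs arbitrary: u) auto

lemma card_path_nth:
  "card_path u cs v \<Longrightarrow> Suc i < length cs \<Longrightarrow> right_part (cs ! i) = left_part (cs ! Suc i)"
proof (induction cs arbitrary: u i)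
  case (Cons c cs)
  show ?case
  proof (cases i)
    case 0
    with Cons.prems have "card_path (right_part c) cs v" "cs \<noteq> []" by auto
    with 0 show ?thesis using card_path_ends by (simp add: hd_conv_nth)
  next
    case (Suc i')
    then show ?thesis using Cons.IH[of "right_part c" i'] Cons.prems by simp
  qed
qed simp

lemma card_path_map_upt:
  assumes "\<And>t. right_part (w t) = left_part (w (Suc t))"
  shows "card_path (left_part (w s)) (map w [s..<s + k]) (left_part (w (s + k)))"
proof (induction k arbitrary: s)
  case (Suc k)
  have "[s..<s + Suc k] = s # [Suc s..<Suc s + k]" by (simp add: upt_rec)
  then show ?case using Suc[of "Suc s"] assms by simp
qed simp

definition card_paths :: "nat \<Rightarrow> nat \<Rightarrow> nat list \<Rightarrow> nat list \<Rightarrow> card list set" where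
  "card_paths b k u v = {cs. length cs = k \<and> set cs \<subseteq> cards b \<and> card_path u cs v}"

lemma finite_card_paths: "finite (card_paths b k u v)"
proof (rule finite_subset)
  show "card_paths b k u v \<subseteq> {cs. set cs \<subseteq> cards b \<and> length cs = k}"
    unfolding card_paths_def by auto
qed (rule finite_lists_length_eq[OF finite_cards])

lemma card_paths_0: "card_paths b 0 u v = (if u = v then {[]} else {})"
  unfolding card_paths_def by auto

lemma card_paths_Suc: "card_paths b (Suc k) u v =
   (\<Union>c\<in>{c\<in>cards b. right_part c = v}. (\<lambda>cs. cs @ [c]) ` card_paths b k u (left_part c))"
proof (intro equalityI subsetI)
  fix xs assume xs: "xs \<in> card_paths b (Suc k) u v"
  then have "xs \<noteq> []" by (auto simp: card_paths_def)
  then obtain cs c where "xs = cs @ [c]" using rev_exhaust by blast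
  with xs show "xs \<in> (\<Union>c\<in>{c\<in>cards b. right_part c = v}. (\<lambda>cs. cs @ [c]) ` card_paths b k u (left_part c))"
    unfolding card_paths_def by (auto simp: card_path_snoc)
qed (auto simp: card_paths_def card_path_snoc)

lemma card_card_paths_Suc: "card (card_paths b (Suc k) u v) =
   (\<Sum>x\<in>ord_parts b. card (card_paths b k u x) * card {c\<in>cards b. left_part c = x \<and> right_part c = v})"
proof -
  let ?Cv = "{c\<in>cards b. right_part c = v}"
  have "card (card_paths b (Suc k) u v) = (\<Sum>c\<in>?Cv. card ((\<lambda>cs. cs @ [c]) ` card_paths b k u (left_part c)))"
    unfolding card_paths_Suc
    by (rule card_UN_disjoint) (auto simp: finite_cards finite_card_paths dest: arg_cong[where f=last])
  also have "\<dots> = (\<Sum>c\<in>?Cv. card (card_paths b k u (left_part c)))"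
    by (intro sum.cong refl card_image) (auto simp: inj_on_def)
  also have "\<dots> = (\<Sum>x\<in>ord_parts b. \<Sum>c\<in>{c\<in>?Cv. left_part c = x}. card (card_paths b k u (left_part c)))"
    by (rule sum.group[symmetric]) (auto simp: finite_cards finite_ord_parts cards_ord_parts)
  also have "\<dots> = (\<Sum>x\<in>ord_parts b. \<Sum>c\<in>{c\<in>cards b. left_part c = x \<and> right_part c = v}. card (card_paths b k u x))"
    by (intro sum.cong) auto
  also have "\<dots> = (\<Sum>x\<in>ord_parts b. card (card_paths b k u x) * card {c\<in>cards b. left_part c = x \<and> right_part c = v})"
    by (simp add: mult.commute)
  finally show ?thesis .
qed

lemma parts_enum: "distinct (parts_enum b) \<and> set (parts_enum b) = ord_parts b"
  unfolding parts_enum_def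
  by (rule someI_ex) (use finite_distinct_list[OF finite_ord_parts] in metis)

lemma sum_parts_enum: "(\<Sum>l<length (parts_enum b). f (parts_enum b ! l)) = (\<Sum>x\<in>ord_parts b. f x)"
proof -
  have "(\<Sum>x\<in>ord_parts b. f x) = sum_list (map f (parts_enum b))"
    using parts_enum by (metis sum_list_distinct_conv_sum_set)
  then show ?thesis by (simp add: sum_list_sum_nth atLeast0LessThan)
qed

lemma A_mat_carrier: "A_mat b \<in> carrier_mat (length (parts_enum b)) (length (parts_enum b))"
  unfolding A_mat_def Let_def by simp

lemma A_mat_entry:
  "i < length (parts_enum b) \<Longrightarrow> j < length (parts_enum b) \<Longrightarrow> A_mat b $$ (i, j) =
     int (card {c \<in> cards b. left_part c = parts_enum b ! i \<and> right_part c = parts_enum b ! j})"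
  unfolding A_mat_def Let_def by simp

lemma A_mat_power_entry:
  assumes "i < length (parts_enum b)" "j < length (parts_enum b)"
  shows "(A_mat b ^\<^sub>m k) $$ (i, j) = int (card (card_paths b k (parts_enum b ! i) (parts_enum b ! j)))"
  using assms(2)
proof (induction k arbitrary: j)
  case 0
  have "parts_enum b ! i = parts_enum b ! j \<longleftrightarrow> i = j"
    using parts_enum assms(1) 0 by (simp add: nth_eq_iff_index_eq)
  then show ?case using assms(1) 0 A_mat_carrier[of b] by (simp add: card_paths_0)
next
  case (Suc k)
  let ?N = "length (parts_enum b)" and ?P = "parts_enum b"
  have "A_mat b ^\<^sub>m k \<in> carrier_mat ?N ?N" using A_mat_carrier by (rule pow_carrier_mat)
  then have "(A_mat b ^\<^sub>m Suc k) $$ (i, j) = (\<Sum>l<?N. (A_mat b ^\<^sub>m k) $$ (i, l) * A_mat b $$ (l, j))"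
    using assms(1) Suc.prems A_mat_carrier[of b] by (simp add: scalar_prod_def atLeast0LessThan)
  also have "\<dots> = (\<Sum>l<?N. int (card (card_paths b k (?P ! i) (?P ! l)) *
       card {c \<in> cards b. left_part c = ?P ! l \<and> right_part c = ?P ! j}))"
    by (intro sum.cong refl) (simp add: Suc.IH Suc.prems A_mat_entry)
  also have "\<dots> = int (card (card_paths b (Suc k) (?P ! i) (?P ! j)))"
    by (simp only: sum_parts_enum[where f="\<lambda>x. int (card (card_paths b k (?P ! i) x) *
       card {c \<in> cards b. left_part c = x \<and> right_part c = ?P ! j})"] card_card_paths_Suc of_nat_sum)
  finally show ?case .
qed

lemma trace_A_mat_power: "mat_trace (A_mat b ^\<^sub>m n) = int (\<Sum>u\<in>ord_parts b. card (card_paths b n u u))"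
proof -
  have "mat_trace (A_mat b ^\<^sub>m n) =
      (\<Sum>i<length (parts_enum b). int (card (card_paths b n (parts_enum b ! i) (parts_enum b ! i))))"
    unfolding mat_trace_def using A_mat_carrier[of b] by (simp add: A_mat_power_entry)
  then show ?thesis by (simp only: sum_parts_enum[where f="\<lambda>u. int (card (card_paths b n u u))"] of_nat_sum)
qed

lemma periodic_add_mult:
  fixes f :: "nat \<Rightarrow> 'a"
  assumes "\<And>t. f (t + n) = f t"
  shows "f (t + n * k) = f t"
proof (induction k)
  case (Suc k)
  have "f (t + n * Suc k) = f ((t + n * k) + n)" by (simp add: algebra_simps)
  with Suc show ?case by (simp add: assms)
qed simp

lemma periodic_mod:
  fixes f :: "nat \<Rightarrow> 'a"
  assumes "\<And>t. f (t + n) = f t"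
  shows "f t = f (t mod n)"
  using periodic_add_mult[of f n "t mod n" "t div n", OF assms] by (simp add: mod_mult_div_eq)

definition periodic_card_seqs :: "nat \<Rightarrow> nat \<Rightarrow> (nat \<Rightarrow> card) set" where
  "periodic_card_seqs b n = {w. (\<forall>t. w t \<in> cards b) \<and>
     (\<forall>t. right_part (w t) = left_part (w (Suc t))) \<and> (\<forall>t. w (t + n) = w t)}"

lemma closed_card_path_periodic:
  assumes n: "n \<ge> 1" and cs: "cs \<in> card_paths b n u u"
  shows "(\<lambda>t. cs ! (t mod n)) \<in> periodic_card_seqs b n"
proof -
  have len: "length cs = n" and sub: "set cs \<subseteq> cards b" and path: "card_path u cs u"
    using cs by (auto simp: card_paths_def)
  have "right_part (cs ! (t mod n)) = left_part (cs ! (Suc t mod n))" for t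
  proof (cases "Suc (t mod n) < n")
    case True
    then have "Suc t mod n = Suc (t mod n)" by (simp add: mod_Suc)
    with True show ?thesis using card_path_nth[OF path] len by simp
  next
    case False
    moreover have "t mod n < n" using n by simp
    ultimately have "t mod n = n - 1" by linarith
    with n have "Suc t mod n = 0" by (simp add: mod_Suc)
    note \<open>t mod n = n - 1\<close> this
    moreover have "cs \<noteq> []" using len n by auto
    ultimately show ?thesis using card_path_ends[OF path] len by (simp add: hd_conv_nth last_conv_nth)
  qed
  moreover have "cs ! (t mod n) \<in> cards b" for t
  proof -
    have "t mod n < length cs" using len n by simp
    then show ?thesis using sub nth_mem by blast
  qed
  ultimately show ?thesis unfolding periodic_card_seqs_def by simp
qed

lemma periodic_card_seqs_bij_closed_paths:
  assumes n: "n \<ge> 1"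
  shows "bij_betw (\<lambda>w. map w [0..<n]) (periodic_card_seqs b n) (\<Union>u\<in>ord_parts b. card_paths b n u u)"
proof (rule bij_betw_byWitness[where f'="\<lambda>cs t. cs ! (t mod n)"])
  show "\<forall>w\<in>periodic_card_seqs b n. (\<lambda>t. map w [0..<n] ! (t mod n)) = w"
  proof
    fix w assume "w \<in> periodic_card_seqs b n"
    then have "\<And>t. w (t + n) = w t" by (simp add: periodic_card_seqs_def)
    then have "w (t mod n) = w t" for t using periodic_mod[of w n t] by simp
    then show "(\<lambda>t. map w [0..<n] ! (t mod n)) = w" using n by (intro ext) simp
  qed
  show "\<forall>cs\<in>\<Union>u\<in>ord_parts b. card_paths b n u u. map (\<lambda>t. cs ! (t mod n)) [0..<n] = cs"
    by (auto simp: card_paths_def intro!: nth_equalityI)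
  show "(\<lambda>cs t. cs ! (t mod n)) ` (\<Union>u\<in>ord_parts b. card_paths b n u u) \<subseteq> periodic_card_seqs b n"
    using closed_card_path_periodic[OF n] by blast
  show "(\<lambda>w. map w [0..<n]) ` periodic_card_seqs b n \<subseteq> (\<Union>u\<in>ord_parts b. card_paths b n u u)"
  proof clarify
    fix w assume w: "w \<in> periodic_card_seqs b n"
    have cards: "\<And>t. w t \<in> cards b" and chain: "\<And>t. right_part (w t) = left_part (w (Suc t))"
      and "w (0 + n) = w 0" using w unfolding periodic_card_seqs_def by blast+
    then have "card_path (left_part (w 0)) (map w [0..<n]) (left_part (w 0))"
      using card_path_map_upt[of w 0 n] by simp
    with cards have "map w [0..<n] \<in> card_paths b n (left_part (w 0)) (left_part (w 0))"
      unfolding card_paths_def by auto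
    moreover have "left_part (w 0) \<in> ord_parts b" using cards cards_ord_parts by blast
    ultimately show "map w [0..<n] \<in> (\<Union>u\<in>ord_parts b. card_paths b n u u)" by blast
  qed
qed

lemma finite_periodic_card_seqs:
  assumes "n \<ge> 1"
  shows "finite (periodic_card_seqs b n)"
proof -
  have "finite (\<Union>u\<in>ord_parts b. card_paths b n u u)"
    by (simp add: finite_ord_parts finite_card_paths)
  then show ?thesis using bij_betw_finite[OF periodic_card_seqs_bij_closed_paths[OF assms]] by simp
qed

lemma card_periodic_card_seqs:
  assumes "n \<ge> 1"
  shows "card (periodic_card_seqs b n) = (\<Sum>u\<in>ord_parts b. card (card_paths b n u u))"
proof -
  have "card (periodic_card_seqs b n) = card (\<Union>u\<in>ord_parts b. card_paths b n u u)"
    using bij_betw_same_card[OF periodic_card_seqs_bij_closed_paths[OF assms]] .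
  also have "\<dots> = (\<Sum>u\<in>ord_parts b. card (card_paths b n u u))"
  proof (intro card_UN_disjoint ballI impI)
    fix u u' :: "nat list" assume "u \<noteq> u'"
    with assms show "card_paths b n u u \<inter> card_paths b n u' u' = {}"
    proof (intro equals0I)
      fix cs assume "cs \<in> card_paths b n u u \<inter> card_paths b n u' u'"
      then have "card_path u cs u" "card_path u' cs u'" "cs \<noteq> []"
        using assms by (auto simp: card_paths_def)
      then show False using card_path_ends \<open>u \<noteq> u'\<close> by metis
    qed
  qed (simp_all add: finite_ord_parts finite_card_paths)
  finally show ?thesis .
qed

section \<open>Landing schedules\<close>

lemma sum_mset_eq_sum_count:
  fixes f :: "nat \<Rightarrow> nat"
  assumes "set_mset M \<subseteq> {1..K}"
  shows "(\<Sum>x\<in>#M. f x) = (\<Sum>d<K. count M (Suc d) * f (Suc d))"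
  using assms
proof (induction M)
  case (add x M)
  then have x: "1 \<le> x" "x \<le> K" by auto
  have "(\<Sum>d<K. count (add_mset x M) (Suc d) * f (Suc d)) =
        (\<Sum>d<K. count M (Suc d) * f (Suc d) + (if d = x - 1 then f (Suc d) else 0))"
    using x by (intro sum.cong refl) auto
  also have "\<dots> = (\<Sum>d<K. count M (Suc d) * f (Suc d)) + f x"
    using x by (simp add: sum.distrib)
  finally show ?case using add by simp
qed simp

lemma size_eq_sum_count:
  "set_mset M \<subseteq> {1..K} \<Longrightarrow> size M = (\<Sum>d<K. count M (Suc d))"
  using sum_mset_eq_sum_count[of M K "\<lambda>_. 1"] by simp

lemma size_filter_mset_eq_sum_count:
  assumes "set_mset M \<subseteq> {1..K}"
  shows "size (filter_mset P M) = (\<Sum>d<K. if P (Suc d) then count M (Suc d) else 0)"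
proof -
  have "set_mset (filter_mset P M) \<subseteq> {1..K}" using assms by auto
  from size_eq_sum_count[OF this] show ?thesis by (simp add: if_distrib)
qed

lemma sum_lessThan_shift_vanishing:
  fixes f :: "nat \<Rightarrow> 'a::comm_monoid_add"
  assumes "f K = 0"
  shows "(\<Sum>d<K. f (Suc d)) + f 0 = (\<Sum>d<K. f d)"
  using sum.lessThan_Suc_shift[of f K] assms by (simp add: add.commute)

lemma sum_lessThan_shift_periodic:
  fixes P :: "nat \<Rightarrow> 'a::cancel_comm_monoid_add"
  assumes "P n = P 0"
  shows "(\<Sum>t<n. P (Suc t)) = (\<Sum>t<n. P t)"
  using sum.lessThan_Suc_shift[of P n] assms by (simp add: add.commute)

definition lag_bounded :: "nat \<Rightarrow> (nat \<Rightarrow> nat \<Rightarrow> nat) \<Rightarrow> bool" where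
  "lag_bounded K l \<longleftrightarrow> (\<forall>t d. K \<le> d \<longrightarrow> l t d = 0)"

lemma lag_bounded_mono: "lag_bounded K l \<Longrightarrow> K \<le> K' \<Longrightarrow> lag_bounded K' l"
  unfolding lag_bounded_def by auto

lemma lag_bounded_finite_support:
  assumes "lag_bounded K l"
  shows "finite {d. 0 < l t d}"
proof (rule finite_subset)
  show "{d. 0 < l t d} \<subseteq> {..<K}"
  proof
    fix d assume "d \<in> {d. 0 < l t d}"
    then have "\<not> K \<le> d" using assms unfolding lag_bounded_def by auto
    then show "d \<in> {..<K}" by simp
  qed
qed simp

text \<open>\<open>l t d\<close> is the number of balls that, at time \<open>t\<close>, are due to land at time \<open>t + d\<close>
  (\<open>d = 0\<close>: the balls landing now), and \<open>m t\<close> is the multiset of heights thrown at time \<open>t\<close>.\<close>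
definition landing_schedule :: "nat \<Rightarrow> (nat \<Rightarrow> nat \<Rightarrow> nat) \<Rightarrow> (nat \<Rightarrow> nat multiset) \<Rightarrow> bool" where
  "landing_schedule n l m \<longleftrightarrow> (\<forall>t d. l (Suc t) d = l t (Suc d) + count (m t) (Suc d)) \<and>
     (\<forall>t. l (t + n) = l t) \<and> (\<forall>t. 0 \<notin># m t)"

definition juggling_schedule :: "nat \<Rightarrow> (nat \<Rightarrow> nat \<Rightarrow> nat) \<Rightarrow> (nat \<Rightarrow> nat multiset) \<Rightarrow> bool" where
  "juggling_schedule n l m \<longleftrightarrow> landing_schedule n l m \<and> (\<forall>t. l t 0 = size (m t)) \<and>
     (\<forall>t. m (t + n) = m t) \<and> (\<exists>K. lag_bounded K l)"

context
  fixes n :: nat and l :: "nat \<Rightarrow> nat \<Rightarrow> nat" and m :: "nat \<Rightarrow> nat multiset"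
  assumes sched: "landing_schedule n l m"
begin

lemma landing_step: "l (Suc t) d = l t (Suc d) + count (m t) (Suc d)"
  using sched unfolding landing_schedule_def by blast

lemma landing_periodic: "l (t + n) = l t"
  using sched unfolding landing_schedule_def by blast

lemma landing_throw_heights:
  assumes "lag_bounded K l"
  shows "set_mset (m t) \<subseteq> {1..K}"
proof
  fix h assume h: "h \<in># m t"
  moreover have "0 \<notin># m t" using sched unfolding landing_schedule_def by blast
  ultimately obtain d where d: "h = Suc d" by (cases h) auto
  with h have "l (Suc t) d \<noteq> 0" using landing_step[of t d] by simp
  then have "d < K" using assms unfolding lag_bounded_def by (metis not_le)
  then show "h \<in> {1..K}" using d by simp
qed

text \<open>The balls landing at time \<open>c\<close> are exactly those thrown during one period towards
  a time \<open>\<equiv> c (mod n)\<close>: the potential \<open>P\<close> counts the balls in the air bound for such times.\<close>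
lemma landing_count:
  assumes K: "lag_bounded K l" and c: "c < n"
  shows "l c 0 = (\<Sum>s<n. size (filter_mset (\<lambda>h. (s + h) mod n = c) (m s)))"
proof -
  define P where "P \<tau> = (\<Sum>d<K. if (\<tau> + d) mod n = c then l \<tau> d else 0)" for \<tau>
  define F where "F \<tau> = size (filter_mset (\<lambda>h. (\<tau> + h) mod n = c) (m \<tau>))" for \<tau>
  define E where "E \<tau> = (if \<tau> mod n = c then l \<tau> 0 else 0)" for \<tau>
  have step: "P (Suc \<tau>) + E \<tau> = P \<tau> + F \<tau>" for \<tau>
  proof -
    have "P (Suc \<tau>) = (\<Sum>d<K. if (\<tau> + Suc d) mod n = c then l \<tau> (Suc d) else 0) +
                      (\<Sum>d<K. if (\<tau> + Suc d) mod n = c then count (m \<tau>) (Suc d) else 0)"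
      unfolding P_def landing_step sum.distrib[symmetric] by (intro sum.cong) auto
    also have "(\<Sum>d<K. if (\<tau> + Suc d) mod n = c then count (m \<tau>) (Suc d) else 0) = F \<tau>"
      unfolding F_def by (rule size_filter_mset_eq_sum_count[OF landing_throw_heights[OF K], symmetric])
    finally show ?thesis
      using sum_lessThan_shift_vanishing[of "\<lambda>d. if (\<tau> + d) mod n = c then l \<tau> d else 0" K] K
      by (simp add: P_def E_def lag_bounded_def)
  qed
  have ln: "l n = l 0" using landing_periodic[of 0] by simp
  have "P n = P 0" unfolding P_def ln by simp
  then have "(\<Sum>\<tau><n. P (Suc \<tau>)) = (\<Sum>\<tau><n. P \<tau>)" by (rule sum_lessThan_shift_periodic)
  moreover have "(\<Sum>\<tau><n. P (Suc \<tau>)) + (\<Sum>\<tau><n. E \<tau>) = (\<Sum>\<tau><n. P \<tau>) + (\<Sum>\<tau><n. F \<tau>)"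
    using step by (simp add: sum.distrib[symmetric])
  moreover have "(\<Sum>\<tau><n. E \<tau>) = (\<Sum>\<tau><n. if \<tau> = c then l \<tau> 0 else 0)"
    unfolding E_def by (intro sum.cong) auto
  ultimately show ?thesis unfolding F_def using c by simp
qed

lemma landing_unroll: "l (t + j) d = l t (d + j) + (\<Sum>k<j. count (m (t + k)) (d + j - k))"
proof (induction j arbitrary: d)
  case (Suc j)
  have "l (t + Suc j) d = l (t + j) (Suc d) + count (m (t + j)) (Suc d)"
    using landing_step by simp
  also have "\<dots> = l t (d + Suc j) + (\<Sum>k<Suc j. count (m (t + k)) (d + Suc j - k))"
    using Suc.IH[of "Suc d"] by simp
  finally show ?case .
qed simp

end

lemma landing_schedule_unique:
  assumes n: "n \<ge> 1" and "landing_schedule n l m" "landing_schedule n l' m"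
    and "lag_bounded K l" "lag_bounded K l'"
  shows "l = l'"
proof (intro ext)
  fix t d
  have vanish: "l t (d + n * K) = 0" "l' t (d + n * K) = 0"
    using assms(4,5) n unfolding lag_bounded_def by (metis le_add2 mult_le_mono1 mult_1 le_trans)+
  have "l t d = l (t + n * K) d" "l' t d = l' (t + n * K) d"
    using periodic_add_mult[of l n t K] periodic_add_mult[of l' n t K]
      landing_periodic[OF assms(2)] landing_periodic[OF assms(3)] by simp_all
  then show "l t d = l' t d"
    using landing_unroll[OF assms(2), of t "n * K" d] landing_unroll[OF assms(3), of t "n * K" d] vanish
    by simp
qed

lemma landing_schedule_throws_unique:
  assumes "landing_schedule n l m" "landing_schedule n l m'"
  shows "m = m'"
proof (intro ext multiset_eqI)
  fix t h
  show "count (m t) h = count (m' t) h"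
  proof (cases h)
    case 0
    then show ?thesis using assms unfolding landing_schedule_def by (simp add: not_in_iff)
  next
    case (Suc d)
    then show ?thesis using landing_step[OF assms(1), of t d] landing_step[OF assms(2), of t d] by simp
  qed
qed

context
  fixes n :: nat and l :: "nat \<Rightarrow> nat \<Rightarrow> nat" and m :: "nat \<Rightarrow> nat multiset" and K :: nat
  assumes sched: "landing_schedule n l m" and lands: "\<And>t. l t 0 = size (m t)"
    and K: "lag_bounded K l"
begin

lemma juggling_throws_count: "(\<Sum>d<K. count (m t) (Suc d)) = l t 0"
  using size_eq_sum_count[OF landing_throw_heights[OF sched K]] lands by simp

lemma juggling_ball_count_Suc: "(\<Sum>d<K. l (Suc t) d) = (\<Sum>d<K. l t d)"
proof -
  have "(\<Sum>d<K. l (Suc t) d) = (\<Sum>d<K. l t (Suc d)) + (\<Sum>d<K. count (m t) (Suc d))"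
    by (simp add: landing_step[OF sched] sum.distrib)
  also have "\<dots> = (\<Sum>d<K. l t d)"
    using juggling_throws_count sum_lessThan_shift_vanishing[of "l t" K] K
    by (simp add: lag_bounded_def)
  finally show ?thesis .
qed

lemma juggling_ball_count: "(\<Sum>d<K. l t d) = (\<Sum>d<K. l 0 d)"
  by (induction t) (simp_all add: juggling_ball_count_Suc)

text \<open>Each beat the total remaining flight time \<open>\<Sum>d. d * l t d\<close> drops by the number
  of balls and rises by the heights thrown.\<close>
lemma juggling_throw_weight: "(\<Sum>t<n. sum_mset (m t)) = n * (\<Sum>d<K. l 0 d)"
proof -
  define B where "B t = (\<Sum>d<K. l t d)" for t
  define P where "P t = (\<Sum>d<K. d * l t d)" for t
  have heights: "set_mset (m t) \<subseteq> {1..K}" for t by (rule landing_throw_heights[OF sched K])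
  have step: "P (Suc t) + B t = P t + sum_mset (m t)" for t
  proof -
    have "P (Suc t) = (\<Sum>d<K. d * l t (Suc d)) + (\<Sum>d<K. d * count (m t) (Suc d))"
      unfolding P_def by (simp add: landing_step[OF sched] sum.distrib algebra_simps)
    moreover have "(\<Sum>d<K. d * l t (Suc d)) + (\<Sum>d<K. l t (Suc d)) = P t"
      using sum_lessThan_shift_vanishing[of "\<lambda>d. d * l t d" K] K
      by (simp add: P_def lag_bounded_def sum.distrib[symmetric] add.commute)
    moreover have "(\<Sum>d<K. d * count (m t) (Suc d)) + l t 0 = sum_mset (m t)"
      using sum_mset_eq_sum_count[OF heights, of "\<lambda>x. x"] juggling_throws_count[of t]
      by (simp add: sum.distrib add.commute mult.commute)
    moreover have "(\<Sum>d<K. l t (Suc d)) + l t 0 = B t"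
      using sum_lessThan_shift_vanishing[of "l t" K] K by (simp add: B_def lag_bounded_def)
    ultimately show ?thesis by linarith
  qed
  have ln: "l n = l 0" using landing_periodic[OF sched, of 0] by simp
  have "P n = P 0" unfolding P_def ln ..
  then have "(\<Sum>t<n. P (Suc t)) = (\<Sum>t<n. P t)" by (rule sum_lessThan_shift_periodic)
  moreover have "(\<Sum>t<n. P (Suc t)) + (\<Sum>t<n. B t) = (\<Sum>t<n. P t) + (\<Sum>t<n. sum_mset (m t))"
    using step by (simp add: sum.distrib[symmetric])
  ultimately have "(\<Sum>t<n. sum_mset (m t)) = (\<Sum>t<n. B t)" by simp
  also have "\<dots> = (\<Sum>t<n. B 0)" unfolding B_def by (intro sum.cong refl juggling_ball_count)
  also have "\<dots> = n * B 0" by simp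
  finally show ?thesis unfolding B_def .
qed

end

section \<open>Multiplex siteswaps as landing schedules\<close>

definition cyclic_throws :: "nat \<Rightarrow> (nat \<Rightarrow> nat multiset) \<Rightarrow> nat \<Rightarrow> nat multiset" where
  "cyclic_throws n M t = M (t mod n)"

definition throw_height_sum :: "nat \<Rightarrow> (nat \<Rightarrow> nat multiset) \<Rightarrow> nat" where
  "throw_height_sum n M = (\<Sum>s<n. sum_mset (M s))"

text \<open>No throw is higher than \<open>H = throw_height_sum n M\<close>, so the balls in the air at time
  \<open>t\<close> were thrown during the \<open>J = n * H\<close> preceding beats; shifting time by the multiple \<open>J\<close>
  of the period keeps all indices natural.\<close>
definition siteswap_schedule :: "nat \<Rightarrow> (nat \<Rightarrow> nat multiset) \<Rightarrow> nat \<Rightarrow> nat \<Rightarrow> nat" where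
  "siteswap_schedule n M t d = (let J = n * throw_height_sum n M in
     \<Sum>k<J. count (cyclic_throws n M (t + k)) (d + J - k))"

lemma cyclic_throws_add_mult: "cyclic_throws n M (t + n * k) = cyclic_throws n M t"
  unfolding cyclic_throws_def by simp

lemma siteswap_throw_heights:
  assumes n: "n \<ge> 1" and M: "M \<in> multiplex_siteswaps n" and h: "h \<in># cyclic_throws n M t"
  shows "1 \<le> h" "h \<le> n * throw_height_sum n M"
proof -
  have s: "t mod n < n" using n by simp
  have hm: "h \<in># M (t mod n)" using h unfolding cyclic_throws_def .
  then show "1 \<le> h" using M s unfolding multiplex_siteswaps_def by (simp add: Suc_le_eq)
  have "h \<le> sum_mset (M (t mod n))" using hm by (metis le_add1 multi_member_split sum_mset.add_mset)
  also have "\<dots> \<le> throw_height_sum n M"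
    unfolding throw_height_sum_def using s by (intro member_le_sum) auto
  also have "\<dots> \<le> n * throw_height_sum n M" using n by simp
  finally show "h \<le> n * throw_height_sum n M" .
qed

context
  fixes n :: nat and M :: "nat \<Rightarrow> nat multiset"
  assumes n: "n \<ge> 1" and M: "M \<in> multiplex_siteswaps n"
begin

lemma siteswap_lag_bounded: "lag_bounded (n * throw_height_sum n M) (siteswap_schedule n M)"
  unfolding lag_bounded_def siteswap_schedule_def Let_def
proof (intro allI impI sum.neutral ballI)
  fix t d k
  assume "n * throw_height_sum n M \<le> d" "k \<in> {..<n * throw_height_sum n M}"
  then have "n * throw_height_sum n M < d + n * throw_height_sum n M - k" by auto
  then show "count (cyclic_throws n M (t + k)) (d + n * throw_height_sum n M - k) = 0"
    using siteswap_throw_heights(2)[OF n M] by (meson count_inI not_le)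
qed

lemma siteswap_landing_schedule: "landing_schedule n (siteswap_schedule n M) (cyclic_throws n M)"
proof -
  let ?J = "n * throw_height_sum n M"
  have big: "count (cyclic_throws n M t) h = 0" if "?J < h" for t h
    using siteswap_throw_heights(2)[OF n M] that by (meson count_inI not_le)
  have step: "siteswap_schedule n M (Suc t) d =
      siteswap_schedule n M t (Suc d) + count (cyclic_throws n M t) (Suc d)" for t d
  proof -
    define f where "f k = count (cyclic_throws n M (t + k)) (Suc d + ?J - k)" for k
    have "siteswap_schedule n M (Suc t) d = (\<Sum>k<?J. f (Suc k))"
      unfolding siteswap_schedule_def Let_def f_def by (intro sum.cong refl) simp
    moreover have "siteswap_schedule n M t (Suc d) = (\<Sum>k<?J. f k)"
      unfolding siteswap_schedule_def Let_def f_def by simp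
    moreover have "f 0 = 0" unfolding f_def using big by simp
    moreover have "f ?J = count (cyclic_throws n M t) (Suc d)"
      unfolding f_def using cyclic_throws_add_mult[of n M t "throw_height_sum n M"] by simp
    ultimately show ?thesis using sum.lessThan_Suc_shift[of f ?J] by simp
  qed
  have "siteswap_schedule n M (t + n) = siteswap_schedule n M t" for t
  proof -
    have "cyclic_throws n M (t + n + k) = cyclic_throws n M (t + k)" for k
      unfolding cyclic_throws_def by (metis add.assoc add.commute mod_add_self2)
    then show ?thesis unfolding siteswap_schedule_def by (simp only:)
  qed
  moreover have "0 \<notin># cyclic_throws n M t" for t
    using siteswap_throw_heights(1)[OF n M] by fastforce
  ultimately show ?thesis unfolding landing_schedule_def using step by blast
qed

lemma siteswap_juggling_schedule: "juggling_schedule n (siteswap_schedule n M) (cyclic_throws n M)"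
proof -
  have "siteswap_schedule n M t 0 = size (cyclic_throws n M t)" for t
  proof -
    have c: "t mod n < n" using n by simp
    have "siteswap_schedule n M t 0 = siteswap_schedule n M (t mod n) 0"
      using periodic_mod[of "siteswap_schedule n M" n t] landing_periodic[OF siteswap_landing_schedule]
      by simp
    also have "\<dots> = (\<Sum>s<n. size (filter_mset (\<lambda>h. (s + h) mod n = t mod n) (M s)))"
      using landing_count[OF siteswap_landing_schedule siteswap_lag_bounded c]
      by (simp add: cyclic_throws_def)
    also have "\<dots> = size (cyclic_throws n M t)"
      using M c unfolding multiplex_siteswaps_def cyclic_throws_def by simp
    finally show ?thesis .
  qed
  then show ?thesis
    unfolding juggling_schedule_def
    using siteswap_landing_schedule siteswap_lag_bounded cyclic_throws_add_mult[of n M _ 1] by auto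
qed

lemma num_balls_siteswap:
  assumes "lag_bounded K (siteswap_schedule n M)"
  shows "num_balls n M = real (\<Sum>d<K. siteswap_schedule n M 0 d)"
proof -
  have "(\<Sum>t<n. sum_mset (M t)) = (\<Sum>t<n. sum_mset (cyclic_throws n M t))"
    by (intro sum.cong refl) (simp add: cyclic_throws_def)
  also have "\<dots> = n * (\<Sum>d<K. siteswap_schedule n M 0 d)"
    using siteswap_juggling_schedule assms unfolding juggling_schedule_def
    by (blast intro: juggling_throw_weight)
  finally show ?thesis unfolding num_balls_def using n by simp
qed

end

lemma cyclic_throws_inj:
  assumes "M \<in> multiplex_siteswaps n" "M' \<in> multiplex_siteswaps n"
    and "cyclic_throws n M = cyclic_throws n M'"
  shows "M = M'"
proof
  fix t
  show "M t = M' t"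
  proof (cases "t < n")
    case True
    then show ?thesis using fun_cong[OF assms(3), of t] unfolding cyclic_throws_def by simp
  next
    case False
    then show ?thesis using assms(1,2) unfolding multiplex_siteswaps_def by auto
  qed
qed

lemma juggling_schedule_siteswap:
  assumes n: "n \<ge> 1" and sched: "juggling_schedule n l m" and K: "lag_bounded K l"
  defines "M \<equiv> (\<lambda>t. if t < n then m t else {#})"
  shows "M \<in> multiplex_siteswaps n" "cyclic_throws n M = m" "num_balls n M = real (\<Sum>d<K. l 0 d)"
proof -
  have land: "landing_schedule n l m" and lands: "\<And>t. l t 0 = size (m t)"
    and per: "\<And>t. m (t + n) = m t"
    using sched unfolding juggling_schedule_def by auto
  show "cyclic_throws n M = m"
    using n periodic_mod[of m n, OF per] unfolding cyclic_throws_def M_def by (intro ext) simp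
  have "size (M t) = (\<Sum>s<n. size (filter_mset (\<lambda>h. (s + h) mod n = t) (M s)))" if t: "t < n" for t
  proof -
    have "size (M t) = l t 0" using t lands unfolding M_def by simp
    also have "\<dots> = (\<Sum>s<n. size (filter_mset (\<lambda>h. (s + h) mod n = t) (m s)))"
      by (rule landing_count[OF land K t])
    finally show ?thesis by (simp add: M_def)
  qed
  moreover have "0 < h" if "h \<in># M t" for t h
  proof -
    have "h \<in># m t" using that unfolding M_def by (simp split: if_splits)
    moreover have "0 \<notin># m t" using land unfolding landing_schedule_def by blast
    ultimately show ?thesis by (cases h) auto
  qed
  moreover have "M t = {#}" if "n \<le> t" for t using that by (simp add: M_def)
  ultimately show "M \<in> multiplex_siteswaps n" unfolding multiplex_siteswaps_def by blast
  have "(\<Sum>t<n. sum_mset (M t)) = (\<Sum>t<n. sum_mset (m t))" by (simp add: M_def)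
  also have "\<dots> = n * (\<Sum>d<K. l 0 d)" using juggling_throw_weight[OF land lands K] .
  finally show "num_balls n M = real (\<Sum>d<K. l 0 d)" unfolding num_balls_def using n by simp
qed

section \<open>Cards between landing profiles\<close>

definition support_list :: "(nat \<Rightarrow> nat) \<Rightarrow> nat list" where
  "support_list f = sorted_list_of_set {d. 0 < f d}"

definition support_values :: "(nat \<Rightarrow> nat) \<Rightarrow> nat list" where
  "support_values f = map f (support_list f)"

definition support_rank :: "(nat \<Rightarrow> nat) \<Rightarrow> nat \<Rightarrow> nat" where
  "support_rank f d = card {x. x < d \<and> 0 < f x}"

lemma length_support_values [simp]: "length (support_values f) = length (support_list f)"
  unfolding support_values_def by simp

lemma nth_support_values: "p < length (support_list f) \<Longrightarrow> support_values f ! p = f (support_list f ! p)"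
  unfolding support_values_def by simp

lemma sorted_list_of_set_eqI:
  assumes "finite A" "sorted_wrt (<) xs" "set xs = A"
  shows "sorted_list_of_set A = xs"
proof -
  have "length xs = card A" using assms(2,3) strict_sorted_iff distinct_card by metis
  then show ?thesis using sorted_list_of_set_unique[OF assms(1)] assms(2,3) by blast
qed

lemma support_list_eqI:
  "finite {d. 0 < f d} \<Longrightarrow> sorted_wrt (<) xs \<Longrightarrow> set xs = {d. 0 < f d} \<Longrightarrow> support_list f = xs"
  unfolding support_list_def by (rule sorted_list_of_set_eqI)

lemma distinct_support_list: "distinct (support_list f)"
  unfolding support_list_def by simp

context
  fixes f :: "nat \<Rightarrow> nat"
  assumes fin: "finite {d. 0 < f d}"
begin

lemma set_support_list: "set (support_list f) = {d. 0 < f d}"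
  unfolding support_list_def using fin by simp

lemma support_list_nth_pos: "p < length (support_list f) \<Longrightarrow> 0 < f (support_list f ! p)"
  using set_support_list nth_mem by blast

lemma support_list_nth_less: "p < q \<Longrightarrow> q < length (support_list f) \<Longrightarrow> support_list f ! p < support_list f ! q"
  unfolding support_list_def using sorted_wrt_nth_less strict_sorted_list_of_set by blast

lemma support_list_obtain: "0 < f d \<Longrightarrow> \<exists>j < length (support_list f). support_list f ! j = d"
  using set_support_list by (metis in_set_conv_nth mem_Collect_eq)

lemma support_rank_nth:
  assumes p: "p < length (support_list f)"
  shows "support_rank f (support_list f ! p) = p"
proof -
  have "{x. x < support_list f ! p \<and> 0 < f x} = (\<lambda>j. support_list f ! j) ` {..<p}"
  proof (intro equalityI subsetI)
    fix x assume "x \<in> {x. x < support_list f ! p \<and> 0 < f x}"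
    then have x: "x < support_list f ! p" "0 < f x" by auto
    then obtain j where j: "j < length (support_list f)" "support_list f ! j = x"
      using support_list_obtain by blast
    have "j < p"
    proof (rule ccontr)
      assume "\<not> j < p"
      then have "p = j \<or> p < j" by linarith
      then have "support_list f ! p \<le> support_list f ! j"
        using support_list_nth_less j(1) by (auto intro: less_imp_le)
      then show False using x j by simp
    qed
    then show "x \<in> (\<lambda>j. support_list f ! j) ` {..<p}" using j by blast
  next
    fix x assume "x \<in> (\<lambda>j. support_list f ! j) ` {..<p}"
    then obtain j where "j < p" "x = support_list f ! j" by blast
    then show "x \<in> {x. x < support_list f ! p \<and> 0 < f x}"
      using support_list_nth_less[of j p] support_list_nth_pos p by auto
  qed
  moreover have "inj_on (\<lambda>j. support_list f ! j) {..<p}"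
    using distinct_support_list p by (auto simp: inj_on_def nth_eq_iff_index_eq)
  ultimately show ?thesis unfolding support_rank_def by (simp add: card_image)
qed

lemma support_rank_mem:
  assumes "0 < f d"
  shows "support_rank f d < length (support_list f)" "support_list f ! support_rank f d = d"
  using support_list_obtain[OF assms] support_rank_nth by auto

lemma support_rank_less: "x < y \<Longrightarrow> 0 < f x \<Longrightarrow> support_rank f x < support_rank f y"
  unfolding support_rank_def by (rule psubset_card_mono) auto

lemma support_list_0: "0 < f 0 \<Longrightarrow> 0 < length (support_list f) \<and> support_list f ! 0 = 0"
  using support_rank_mem[of 0] unfolding support_rank_def by simp

lemma sum_support_values:
  assumes "\<And>d. K \<le> d \<Longrightarrow> f d = 0"
  shows "sum_list (support_values f) = (\<Sum>d<K. f d)"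
proof -
  have "sum_list (support_values f) = (\<Sum>d\<in>{d. 0 < f d}. f d)" unfolding support_values_def
    using distinct_support_list set_support_list by (simp add: sum_list_distinct_conv_sum_set)
  also have "\<dots> = (\<Sum>d<K. f d)"
  proof (rule sum.mono_neutral_left)
    show "{d. 0 < f d} \<subseteq> {..<K}" using assms by (metis lessThan_iff mem_Collect_eq not_le not_less0 subsetI)
  qed auto
  finally show ?thesis .
qed

lemma support_values_pos: "x \<in> set (support_values f) \<Longrightarrow> 0 < x"
  unfolding support_values_def using set_support_list by auto

end

context
  fixes f g :: "nat \<Rightarrow> nat"
  assumes f0: "f 0 = 0" and fg: "\<And>d. g d = f (Suc d)"
begin

lemma support_rank_shift: "support_rank g d = support_rank f (Suc d)"
proof -
  have "{x. x < Suc d \<and> 0 < f x} = Suc ` {x. x < d \<and> 0 < g x}"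
  proof (intro equalityI subsetI)
    fix x assume "x \<in> {x. x < Suc d \<and> 0 < f x}"
    with f0 obtain y where "x = Suc y" "y < d" "0 < g y" using fg by (cases x) auto
    then show "x \<in> Suc ` {x. x < d \<and> 0 < g x}" by blast
  qed (use fg in auto)
  then show ?thesis unfolding support_rank_def by (simp add: card_image)
qed

lemma support_list_shift:
  assumes "finite {d. 0 < g d}"
  shows "support_list f = map Suc (support_list g)"
proof (rule support_list_eqI)
  have supp: "{d. 0 < f d} = Suc ` {d. 0 < g d}"
  proof (intro equalityI subsetI)
    fix x assume "x \<in> {d. 0 < f d}"
    with f0 obtain y where "x = Suc y" "0 < g y" using fg by (cases x) auto
    then show "x \<in> Suc ` {d. 0 < g d}" by blast
  qed (use fg in auto)
  then show "finite {d. 0 < f d}" using assms by simp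
  show "sorted_wrt (<) (map Suc (support_list g))"
    using strict_sorted_list_of_set[of "{d. 0 < g d}"] by (simp add: support_list_def sorted_wrt_map)
  show "set (map Suc (support_list g)) = {d. 0 < f d}"
    using set_support_list[OF assms] supp by simp
qed

lemma support_values_shift: "finite {d. 0 < g d} \<Longrightarrow> support_values f = support_values g"
  unfolding support_values_def using support_list_shift fg by simp

end

lemma support_values_inj:
  assumes "finite {d. 0 < f d}" "finite {d. 0 < g d}"
    and "support_list f = support_list g" "support_values f = support_values g"
  shows "f = g"
proof
  fix x
  show "f x = g x"
  proof (cases "0 < f x")
    case True
    then obtain j where "j < length (support_list f)" "support_list f ! j = x"
      using support_list_obtain[OF assms(1)] by blast
    then show ?thesis using assms(3,4) nth_support_values by metis
  next
    case False
    then have "x \<notin> set (support_list g)" using assms(3) set_support_list[OF assms(1)] by simp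
    then show ?thesis using False set_support_list[OF assms(2)] by simp
  qed
qed

text \<open>Between consecutive landing profiles every group of balls moves one beat closer to
  landing; new throws may join groups (\<open>f (Suc d) \<le> g d\<close>) only if some group lands now.\<close>
definition state_step :: "(nat \<Rightarrow> nat) \<Rightarrow> (nat \<Rightarrow> nat) \<Rightarrow> bool" where
  "state_step f g \<longleftrightarrow> finite {d. 0 < f d} \<and> finite {d. 0 < g d} \<and> (\<forall>d. f (Suc d) \<le> g d) \<and>
     (f 0 = 0 \<longrightarrow> (\<forall>d. g d = f (Suc d)))"

text \<open>The (1-based) position in the right partition that the part at position \<open>p\<close> of the
  left partition is embedded into: a ball group at lag \<open>d\<close> reappears at lag \<open>d - 1\<close>, and the
  idle parts following the live ones keep their order.\<close>
definition throw_target :: "(nat \<Rightarrow> nat) \<Rightarrow> (nat \<Rightarrow> nat) \<Rightarrow> nat \<Rightarrow> nat" where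
  "throw_target f g p = (if p < length (support_list f) then Suc (support_rank g (support_list f ! p - 1))
     else p - length (support_list f) + length (support_list g) + 1)"

definition transition_card :: "(nat \<Rightarrow> nat) \<Rightarrow> (nat \<Rightarrow> nat) \<Rightarrow> nat list \<Rightarrow> card" where
  "transition_card f g e = (if f 0 = 0 then Trivial (support_values f @ e)
     else Throw (support_values f @ e) (support_values g @ e)
       (map (throw_target f g) [1..<length (support_list f) + length e]))"

lemma left_part_transition_card: "left_part (transition_card f g e) = support_values f @ e"
  unfolding transition_card_def by simp

lemma right_part_transition_card:
  assumes "state_step f g"
  shows "right_part (transition_card f g e) = support_values g @ e"
  using assms support_values_shift[of f g] unfolding transition_card_def state_step_def by auto

context
  fixes f g :: "nat \<Rightarrow> nat"
  assumes step: "state_step f g" and f0: "0 < f 0"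
begin

lemma finite_support_step: "finite {d. 0 < f d}" "finite {d. 0 < g d}"
  using step unfolding state_step_def by auto

lemma throw_target_live:
  assumes p: "1 \<le> p" "p < length (support_list f)"
  shows "1 \<le> support_list f ! p" "f (support_list f ! p) \<le> g (support_list f ! p - 1)"
    "support_rank g (support_list f ! p - 1) < length (support_list g)"
    "support_list g ! support_rank g (support_list f ! p - 1) = support_list f ! p - 1"
proof -
  have "support_list f ! 0 < support_list f ! p"
    using support_list_nth_less[OF finite_support_step(1)] p by simp
  then show d1: "1 \<le> support_list f ! p" using support_list_0[OF finite_support_step(1) f0] by simp
  have "f (support_list f ! p) = f (Suc (support_list f ! p - 1))" using d1 by simp
  then show fle: "f (support_list f ! p) \<le> g (support_list f ! p - 1)"
    using step unfolding state_step_def by simp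
  moreover have "0 < f (support_list f ! p)"
    using support_list_nth_pos[OF finite_support_step(1) p(2)] .
  ultimately have "0 < g (support_list f ! p - 1)" by linarith
  then show "support_rank g (support_list f ! p - 1) < length (support_list g)"
    "support_list g ! support_rank g (support_list f ! p - 1) = support_list f ! p - 1"
    using support_rank_mem[OF finite_support_step(2)] by auto
qed

lemma throw_target_strict_mono:
  assumes p: "1 \<le> p" "p < p'"
  shows "throw_target f g p < throw_target f g p'"
proof (cases "p' < length (support_list f)")
  case True
  have "support_list f ! p - 1 < support_list f ! p' - 1"
    using support_list_nth_less[OF finite_support_step(1) p(2) True] throw_target_live(1)[of p] p True
    by linarith
  moreover have "0 < g (support_list f ! p - 1)"
    using throw_target_live(2)[of p] support_list_nth_pos[OF finite_support_step(1), of p] p True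
    by linarith
  ultimately have "support_rank g (support_list f ! p - 1) < support_rank g (support_list f ! p' - 1)"
    by (rule support_rank_less[OF finite_support_step(2)])
  then show ?thesis unfolding throw_target_def using p True by simp
next
  case False
  then show ?thesis
    using throw_target_live(3)[of p] p unfolding throw_target_def by auto
qed

lemma throw_targets_embedding:
  "map (throw_target f g) [1..<length (support_list f) + length e]
     \<in> embeddings (support_values f @ e) (support_values g @ e)"
proof -
  let ?Lf = "length (support_list f)" and ?Lg = "length (support_list g)"
  let ?q = "support_values f @ e" and ?r = "support_values g @ e"
  let ?is = "map (throw_target f g) [1..<?Lf + length e]"
  have "0 < length ?q" using support_list_0[OF finite_support_step(1) f0] by simp
  then have q: "?q \<noteq> []" by (rule length_greater_0_conv[THEN iffD1])
  have "1 \<le> ?is ! j \<and> ?is ! j \<le> length ?r \<and> ?q ! (j + 1) \<le> ?r ! (?is ! j - 1)"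
    if j: "j < length ?is" for j
  proof (cases "Suc j < ?Lf")
    case True
    note live = throw_target_live[of "Suc j"]
    have "?q ! Suc j = f (support_list f ! Suc j)" using True by (simp add: nth_append nth_support_values)
    also have "\<dots> \<le> g (support_list f ! Suc j - 1)" using live True by simp
    also have "\<dots> = ?r ! (?is ! j - 1)"
      using True live j by (simp add: throw_target_def nth_append nth_support_values)
    finally show ?thesis using True live j by (simp add: throw_target_def)
  next
    case False
    with j have ix: "?is ! j = Suc j - ?Lf + ?Lg + 1" by (simp add: throw_target_def)
    have "?q ! (j + 1) = e ! (Suc j - ?Lf)" using False by (simp add: nth_append)
    moreover have "?r ! (?is ! j - 1) = e ! (Suc j - ?Lf)" unfolding ix by (simp add: nth_append)
    moreover have "?is ! j \<le> length ?r" using ix j False by simp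
    ultimately show ?thesis using ix by simp
  qed
  moreover have "sorted_wrt (<) ?is"
    unfolding sorted_wrt_iff_nth_less by (simp add: throw_target_strict_mono)
  ultimately show ?thesis unfolding embeddings_def using q by simp
qed

end

lemma transition_card_in_cards:
  assumes step: "state_step f g" and sums: "sum_list (support_values f) = i" "sum_list (support_values g) = i"
    and e: "e \<in> ord_parts (b - i)" and i: "i \<le> b"
  shows "transition_card f g e \<in> cards b"
proof -
  have "support_values f @ e \<in> ord_parts b" "support_values g @ e \<in> ord_parts b"
    using sums e i support_values_pos step unfolding state_step_def ord_parts_def by auto
  moreover have "support_values f @ e \<noteq> []" if "0 < f 0"
  proof -
    have "0 < length (support_values f @ e)"
      using support_list_0[of f] step that unfolding state_step_def by simp
    then show ?thesis by (rule length_greater_0_conv[THEN iffD1])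
  qed
  ultimately show ?thesis
    using throw_targets_embedding[OF step] unfolding transition_card_def cards_def by auto
qed

text \<open>The (0-based) position in the right partition of the part at position \<open>p\<close> of the left
  partition, or \<open>None\<close> if that part is thrown.\<close>
fun card_succ :: "card \<Rightarrow> nat \<Rightarrow> nat option" where
  "card_succ (Trivial q) p = Some p"
| "card_succ (Throw q r is) p = (if p = 0 then None else Some (is ! (p - 1) - 1))"

lemma card_succ_transition_card_0: "0 < f 0 \<Longrightarrow> card_succ (transition_card f g e) 0 = None"
  unfolding transition_card_def by simp

lemma card_succ_transition_card_live:
  assumes step: "state_step f g" and p: "p < length (support_list f)" and d: "support_list f ! p = Suc d"
  shows "card_succ (transition_card f g e) p = Some (support_rank g d)"
    "support_rank g d < length (support_list g)" "support_list g ! support_rank g d = d"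
proof -
  have fin: "finite {d. 0 < f d}" "finite {d. 0 < g d}" using step unfolding state_step_def by auto
  have "0 < f (Suc d)" using support_list_nth_pos[OF fin(1) p] d by simp
  then have gd: "0 < g d" using step unfolding state_step_def by (metis le_less_trans not_le)
  show "support_rank g d < length (support_list g)" "support_list g ! support_rank g d = d"
    using support_rank_mem[OF fin(2) gd] by auto
  show "card_succ (transition_card f g e) p = Some (support_rank g d)"
  proof (cases "f 0 = 0")
    case True
    then have "support_rank g d = support_rank f (Suc d)"
      using step support_rank_shift[of f g] unfolding state_step_def by auto
    also have "\<dots> = p" using support_rank_nth[OF fin(1) p] d by simp
    finally show ?thesis unfolding transition_card_def using True by simp
  next
    case False
    have "p \<noteq> 0"
    proof
      assume "p = 0"
      then show False using support_list_0[OF fin(1)] d False by simp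
    qed
    then show ?thesis unfolding transition_card_def throw_target_def using False p d by simp
  qed
qed

lemma card_succ_transition_card_idle:
  assumes step: "state_step f g" and p: "length (support_list f) \<le> p" "p < length (support_list f) + length e"
  shows "card_succ (transition_card f g e) p = Some (p - length (support_list f) + length (support_list g))"
proof (cases "f 0 = 0")
  case True
  then have "length (support_list f) = length (support_list g)"
    using step support_list_shift[of f g] unfolding state_step_def by auto
  then show ?thesis unfolding transition_card_def using True p by simp
next
  case False
  have "0 < length (support_list f)" using support_list_0[of f] step False unfolding state_step_def by simp
  with p have "p \<noteq> 0" by linarith
  then show ?thesis unfolding transition_card_def throw_target_def using False p by simp
qed

section \<open>Following parts through a card sequence\<close>

fun track :: "(nat \<Rightarrow> card) \<Rightarrow> nat \<Rightarrow> nat \<Rightarrow> nat \<Rightarrow> nat option" where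
  "track w t p 0 = Some p"
| "track w t p (Suc k) = (case card_succ (w t) p of None \<Rightarrow> None | Some a \<Rightarrow> track w (Suc t) a k)"

lemma track_Suc_snoc:
  "track w t p (Suc k) = (case track w t p k of None \<Rightarrow> None | Some a \<Rightarrow> card_succ (w (t + k)) a)"
proof (induction k arbitrary: t p)
  case 0
  then show ?case by (cases "card_succ (w t) p") auto
next
  case (Suc k)
  show ?case
  proof (cases "card_succ (w t) p")
    case (Some a)
    have shift: "t + Suc k = Suc t + k" by simp
    show ?thesis unfolding shift using Some Suc.IH[of "Suc t" a] by simp
  qed simp
qed

definition lands :: "(nat \<Rightarrow> card) \<Rightarrow> nat \<Rightarrow> nat \<Rightarrow> bool" where
  "lands w t p \<longleftrightarrow> (\<exists>k. track w t p k = None)"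

definition landing_time :: "(nat \<Rightarrow> card) \<Rightarrow> nat \<Rightarrow> nat \<Rightarrow> nat" where
  "landing_time w t p = (LEAST k. track w t p (Suc k) = None)"

lemma landing_time_eqI:
  assumes "track w t p (Suc d) = None" "\<And>k. k \<le> d \<Longrightarrow> track w t p k \<noteq> None"
  shows "landing_time w t p = d"
  unfolding landing_time_def
proof (rule Least_equality)
  fix k assume "track w t p (Suc k) = None"
  then show "d \<le> k" using assms(2)[of "Suc k"] by (metis not_less_eq_eq)
qed (rule assms(1))

lemma lands_landing_time:
  assumes "lands w t p"
  shows "track w t p (Suc (landing_time w t p)) = None"
    "\<And>k. k \<le> landing_time w t p \<Longrightarrow> track w t p k \<noteq> None"
proof -
  obtain k where k: "track w t p (Suc k) = None"
    using assms unfolding lands_def by (metis track.simps(1) option.distinct(1) not0_implies_Suc)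
  then show "track w t p (Suc (landing_time w t p)) = None"
    unfolding landing_time_def by (rule LeastI)
  fix j assume j: "j \<le> landing_time w t p"
  show "track w t p j \<noteq> None"
  proof
    assume jn: "track w t p j = None"
    then obtain j' where jj: "j = Suc j'" by (cases j) auto
    have "landing_time w t p \<le> j'" unfolding landing_time_def by (rule Least_le) (use jn jj in simp)
    then show False using j jj by simp
  qed
qed

definition realizes :: "(nat \<Rightarrow> card) \<Rightarrow> (nat \<Rightarrow> nat \<Rightarrow> nat) \<Rightarrow> nat list \<Rightarrow> bool" where
  "realizes w l e \<longleftrightarrow> (\<forall>t. w t = transition_card (l t) (l (Suc t)) e \<and> state_step (l t) (l (Suc t)))"

context
  fixes w :: "nat \<Rightarrow> card" and l :: "nat \<Rightarrow> nat \<Rightarrow> nat" and e :: "nat list"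
  assumes real: "realizes w l e"
begin

lemma realizes_card: "w t = transition_card (l t) (l (Suc t)) e"
  using real unfolding realizes_def by blast

lemma realizes_step: "state_step (l t) (l (Suc t))"
  using real unfolding realizes_def by blast

lemma realizes_track_live:
  "p < length (support_list (l t)) \<Longrightarrow> support_list (l t) ! p = d \<Longrightarrow>
     track w t p (Suc d) = None \<and> (\<forall>k < Suc d. track w t p k \<noteq> None)"
proof (induction d arbitrary: t p)
  case 0
  have fin: "finite {d. 0 < l t d}" using realizes_step unfolding state_step_def by blast
  have "0 < l t 0" using support_list_nth_pos[OF fin 0(1)] 0(2) by simp
  moreover have "p = 0" using support_rank_nth[OF fin 0(1)] 0(2) by (simp add: support_rank_def)
  ultimately show ?case using card_succ_transition_card_0 realizes_card by simp
next
  case (Suc d)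
  let ?p' = "support_rank (l (Suc t)) d"
  note succ = card_succ_transition_card_live[OF realizes_step Suc.prems]
  have "track w (Suc t) ?p' (Suc d) = None \<and> (\<forall>k < Suc d. track w (Suc t) ?p' k \<noteq> None)"
    using Suc.IH succ(2,3) by blast
  moreover have "card_succ (w t) p = Some ?p'" using succ(1) realizes_card by simp
  ultimately show ?case by (simp add: All_less_Suc2)
qed

lemma realizes_track_idle:
  "length (support_list (l t)) \<le> p \<Longrightarrow> p < length (support_list (l t)) + length e \<Longrightarrow>
     track w t p k \<noteq> None"
proof (induction k arbitrary: t p)
  case (Suc k)
  let ?p' = "p - length (support_list (l t)) + length (support_list (l (Suc t)))"
  have "card_succ (w t) p = Some ?p'"
    using card_succ_transition_card_idle[OF realizes_step Suc.prems] realizes_card by simp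
  moreover have "track w (Suc t) ?p' k \<noteq> None" using Suc.IH Suc.prems by simp
  ultimately show ?case by simp
qed simp

lemma realizes_lands_iff:
  "p < length (support_list (l t)) + length e \<Longrightarrow> lands w t p \<longleftrightarrow> p < length (support_list (l t))"
  using realizes_track_live realizes_track_idle unfolding lands_def by (metis not_le)

lemma realizes_landing_time:
  "p < length (support_list (l t)) \<Longrightarrow> landing_time w t p = support_list (l t) ! p"
  using landing_time_eqI realizes_track_live by (metis less_Suc_eq_le)

end

text \<open>Whether a position lands is read off from \<open>w\<close> alone; this fixes the number of live
  parts, then their landing times, and with the left partitions their weights.\<close>
lemma realizes_unique:
  assumes real: "realizes w l e" and real': "realizes w l' e'"
  shows "l = l' \<and> e = e'"
proof -
  have at_t: "l t = l' t \<and> e = e'" for t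
  proof -
    let ?L = "length (support_list (l t))" and ?L' = "length (support_list (l' t))"
    have fin: "finite {d. 0 < l t d}" "finite {d. 0 < l' t d}"
      using realizes_step[OF real] realizes_step[OF real'] unfolding state_step_def by blast+
    have parts: "support_values (l t) @ e = support_values (l' t) @ e'"
      using realizes_card[OF real, of t] realizes_card[OF real', of t] left_part_transition_card by metis
    have N: "?L + length e = ?L' + length e'" using arg_cong[OF parts, of length] by simp
    have "{p. p < ?L + length e \<and> lands w t p} = {..<?L}"
      using realizes_lands_iff[OF real] by auto
    moreover have "{p. p < ?L + length e \<and> lands w t p} = {..<?L'}"
      using realizes_lands_iff[OF real'] N by auto
    ultimately have L: "?L = ?L'" by (metis card_lessThan)
    then have "support_values (l t) = support_values (l' t)" "e = e'"
      using parts by (simp_all add: append_eq_append_conv)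
    moreover have "support_list (l t) = support_list (l' t)"
      using realizes_landing_time[OF real] realizes_landing_time[OF real'] L
      by (metis nth_equalityI)
    ultimately show ?thesis using support_values_inj[OF fin] by blast
  qed
  then show ?thesis by blast
qed

lemma downward_closed_eq_lessThan_card:
  fixes S :: "nat set"
  assumes fin: "finite S" and down: "\<And>x y. y \<in> S \<Longrightarrow> x < y \<Longrightarrow> x \<in> S"
  shows "S = {..<card S}"
proof (intro equalityI subsetI)
  fix x assume x: "x \<in> S"
  then have "{..x} \<subseteq> S" using down by (auto simp: le_less)
  then have "card {..x} \<le> card S" using fin by (rule card_mono[rotated])
  then show "x \<in> {..<card S}" by simp
next
  fix x assume "x \<in> {..<card S}"
  show "x \<in> S"
  proof (rule ccontr)
    assume "x \<notin> S"
    then have "S \<subseteq> {..<x}" using down by (metis lessThan_iff linorder_neqE_nat subsetI)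
    then have "card S \<le> x" by (metis card_lessThan card_mono finite_lessThan)
    then show False using \<open>x \<in> {..<card S}\<close> by simp
  qed
qed

definition is_throw :: "card \<Rightarrow> bool" where
  "is_throw c = (case c of Trivial _ \<Rightarrow> False | Throw _ _ _ \<Rightarrow> True)"

lemma card_succ_None_iff: "card_succ c p = None \<longleftrightarrow> p = 0 \<and> is_throw c"
  by (cases c) (auto simp: is_throw_def)

locale periodic_card_seq =
  fixes b n :: nat and w :: "nat \<Rightarrow> card"
  assumes periodic_seq: "w \<in> periodic_card_seqs b n" and period_pos: "n \<ge> 1"
begin

abbreviation state :: "nat \<Rightarrow> nat list" where
  "state t \<equiv> left_part (w t)"

lemma card_in_cards: "w t \<in> cards b"
  using periodic_seq unfolding periodic_card_seqs_def by blast

lemma right_part_card: "right_part (w t) = state (Suc t)"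
  using periodic_seq unfolding periodic_card_seqs_def by blast

lemma card_periodic: "w (t + n) = w t"
  using periodic_seq unfolding periodic_card_seqs_def by blast

lemma state_ord_parts: "state t \<in> ord_parts b"
  using card_in_cards cards_ord_parts by blast

lemma state_pos: "p < length (state t) \<Longrightarrow> 0 < state t ! p"
  using state_ord_parts[of t] unfolding ord_parts_def by (auto dest: nth_mem)

lemma Trivial_state: "w t = Trivial q \<Longrightarrow> state t = q \<and> state (Suc t) = q"
  using right_part_card[of t] by simp

lemma Throw_card:
  assumes "w t = Throw q r is"
  shows "q = state t" "r = state (Suc t)" "q \<noteq> []" "length is = length q - 1" "sorted_wrt (<) is"
    "\<And>j. j < length is \<Longrightarrow> 1 \<le> is ! j \<and> is ! j \<le> length r \<and> q ! (j + 1) \<le> r ! (is ! j - 1)"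
proof -
  have "Throw q r is \<in> cards b" using card_in_cards[of t] assms by simp
  then have q: "q \<noteq> []" and emb: "is \<in> embeddings q r" unfolding cards_def by auto
  show "q = state t" "r = state (Suc t)" using assms right_part_card[of t] by simp_all
  show "q \<noteq> []" by (rule q)
  show "length is = length q - 1" "sorted_wrt (<) is"
    "\<And>j. j < length is \<Longrightarrow> 1 \<le> is ! j \<and> is ! j \<le> length r \<and> q ! (j + 1) \<le> r ! (is ! j - 1)"
    using emb q unfolding embeddings_def by auto
qed

lemma card_succ_state:
  assumes p: "p < length (state t)" and s: "card_succ (w t) p = Some p'"
  shows "p' < length (state (Suc t)) \<and> state t ! p \<le> state (Suc t) ! p'"
proof (cases "w t")
  case (Trivial q)
  then show ?thesis using s p Trivial_state[OF Trivial] by simp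
next
  case (Throw q r "is")
  note emb = Throw_card[OF Throw]
  have p0: "p \<noteq> 0" and p': "p' = is ! (p - 1) - 1" using s Throw by (auto split: if_splits)
  have "p - 1 < length is" using emb(1,4) p p0 by simp
  then show ?thesis using emb(1,2) emb(6)[of "p - 1"] p0 p' by auto
qed

lemma card_succ_strict_mono:
  assumes p: "p1 < p2" "p2 < length (state t)"
    and s: "card_succ (w t) p1 = Some a1" "card_succ (w t) p2 = Some a2"
  shows "a1 < a2"
proof (cases "w t")
  case (Trivial q)
  then show ?thesis using s p by simp
next
  case (Throw q r "is")
  note emb = Throw_card[OF Throw]
  have p1: "p1 \<noteq> 0" and a: "a1 = is ! (p1 - 1) - 1" "a2 = is ! (p2 - 1) - 1"
    using s Throw by (auto split: if_splits)
  have j: "p2 - 1 < length is" using emb(1,4) p p1 by simp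
  have "is ! (p1 - 1) < is ! (p2 - 1)" using sorted_wrt_nth_less[OF emb(5)] j p p1 by simp
  moreover have "1 \<le> is ! (p1 - 1)" using emb(6)[of "p1 - 1"] j p by simp
  ultimately show ?thesis using a by linarith
qed

lemma track_periodic: "track w (t + n) p k = track w t p k"
proof (induction k arbitrary: t p)
  case (Suc k)
  then show ?case using card_periodic[of t] Suc.IH[of "Suc t"] by (simp split: option.splits)
qed simp

lemma track_strict_mono:
  "p1 < p2 \<Longrightarrow> p2 < length (state t) \<Longrightarrow> track w t p2 k = Some a2 \<Longrightarrow> track w t p1 k = Some a1 \<Longrightarrow>
    a1 < a2"
proof (induction k arbitrary: t p1 p2)
  case (Suc k)
  obtain b2 where s2: "card_succ (w t) p2 = Some b2" and r2: "track w (Suc t) b2 k = Some a2"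
    using Suc.prems(3) by (cases "card_succ (w t) p2") auto
  obtain b1 where s1: "card_succ (w t) p1 = Some b1" and r1: "track w (Suc t) b1 k = Some a1"
    using Suc.prems(4) by (cases "card_succ (w t) p1") auto
  have "b1 < b2" using card_succ_strict_mono[OF Suc.prems(1,2) s1 s2] .
  moreover have "b2 < length (state (Suc t))" using card_succ_state[OF Suc.prems(2) s2] by simp
  ultimately show ?case using Suc.IH r1 r2 by blast
qed simp

text \<open>Parts keep their relative order, and only the first one can be thrown: so parts in
  front of a part that lands land earlier.\<close>
lemma lands_before:
  assumes p: "p1 < p2" "p2 < length (state t)" and lands2: "lands w t p2"
  shows "lands w t p1 \<and> landing_time w t p1 < landing_time w t p2"
proof -
  let ?d = "landing_time w t p2"
  obtain a2 where a2: "track w t p2 ?d = Some a2" using lands_landing_time(2)[OF lands2] by blast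
  have "card_succ (w (t + ?d)) a2 = None"
    using lands_landing_time(1)[OF lands2] a2 track_Suc_snoc[of w t p2 ?d] by simp
  then have "a2 = 0" using card_succ_None_iff by simp
  then have none: "track w t p1 ?d = None" using track_strict_mono[OF p a2] by fastforce
  then obtain d' where d': "?d = Suc d'" by (cases ?d) auto
  with none have "track w t p1 (Suc d') = None" by simp
  then have "landing_time w t p1 \<le> d'" unfolding landing_time_def by (rule Least_le)
  moreover have "lands w t p1" unfolding lands_def using none by blast
  ultimately show ?thesis using d' by simp
qed

lemma landing_time_0_iff:
  "lands w t p \<and> landing_time w t p = 0 \<longleftrightarrow> p = 0 \<and> is_throw (w t)"
proof
  assume "lands w t p \<and> landing_time w t p = 0"
  then have "track w t p (Suc 0) = None" using lands_landing_time(1) by fastforce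
  then show "p = 0 \<and> is_throw (w t)" using card_succ_None_iff by (cases "card_succ (w t) p") auto
next
  assume "p = 0 \<and> is_throw (w t)"
  then have "card_succ (w t) p = None" using card_succ_None_iff[of "w t" p] by simp
  then have none: "track w t p (Suc 0) = None" by simp
  then have "landing_time w t p = 0" by (rule landing_time_eqI) simp
  with none show "lands w t p \<and> landing_time w t p = 0" unfolding lands_def by blast
qed

lemma landing_time_Suc:
  assumes p: "p < length (state t)" and lands: "lands w t p" and d: "landing_time w t p = Suc d"
  obtains p' where "card_succ (w t) p = Some p'" "p' < length (state (Suc t))"
    "state t ! p \<le> state (Suc t) ! p'" "lands w (Suc t) p'" "landing_time w (Suc t) p' = d"
proof -
  have none: "track w t p (Suc (Suc d)) = None" and some: "\<And>k. k \<le> Suc d \<Longrightarrow> track w t p k \<noteq> None"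
    using lands_landing_time[OF lands] d by auto
  obtain p' where s: "card_succ (w t) p = Some p'"
    using some[of "Suc 0"] by (cases "card_succ (w t) p") auto
  have "track w (Suc t) p' (Suc d) = None" using none s by simp
  moreover have "track w (Suc t) p' k \<noteq> None" if "k \<le> d" for k
    using some[of "Suc k"] that s by simp
  ultimately show ?thesis
    using that s card_succ_state[OF p s] landing_time_eqI unfolding lands_def by blast
qed

lemma not_lands_step:
  assumes p: "p < length (state t)" and not_lands: "\<not> lands w t p"
  obtains p' where "card_succ (w t) p = Some p'" "p' < length (state (Suc t))"
    "state t ! p \<le> state (Suc t) ! p'" "\<not> lands w (Suc t) p'"
proof -
  obtain p' where s: "card_succ (w t) p = Some p'"
    using not_lands unfolding lands_def by (metis option.exhaust option.simps(4) track.simps(2))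
  have "\<not> lands w (Suc t) p'"
    using not_lands s unfolding lands_def by (metis option.simps(5) track.simps(2))
  then show ?thesis using that s card_succ_state[OF p s] by blast
qed

lemma state_periodic: "state (t + n) = state t"
  using card_periodic by simp

lemma lands_periodic: "lands w (t + n) p = lands w t p"
  unfolding lands_def using track_periodic by simp

lemma landing_time_periodic: "landing_time w (t + n) p = landing_time w t p"
  by (simp only: landing_time_def track_periodic)

definition live_count :: "nat \<Rightarrow> nat" where
  "live_count t = card {p. p < length (state t) \<and> lands w t p}"

lemma lands_set: "{p. p < length (state t) \<and> lands w t p} = {..<live_count t}"
  unfolding live_count_def
proof (rule downward_closed_eq_lessThan_card)
  fix x y assume "y \<in> {p. p < length (state t) \<and> lands w t p}" "x < y"
  then have "x < length (state t)" "lands w t x" using lands_before[of x y t] by auto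
  then show "x \<in> {p. p < length (state t) \<and> lands w t p}" by blast
qed (rule finite_subset[of _ "{..<length (state t)}"], auto)

lemma live_count_le: "live_count t \<le> length (state t)"
  using lands_set[of t] by (metis (no_types, lifting) lessThan_iff mem_Collect_eq not_le order_refl)

lemma lands_iff_less_live_count: "p < length (state t) \<Longrightarrow> lands w t p \<longleftrightarrow> p < live_count t"
  using lands_set[of t] by blast

lemma less_live_count: "p < live_count t \<Longrightarrow> lands w t p \<and> p < length (state t)"
  using lands_set[of t] by blast

lemma live_count_periodic: "live_count (t + n) = live_count t"
  unfolding live_count_def using state_periodic lands_periodic by simp

text \<open>Parts that never land are idle. Throws can only join idle parts, so the idle weight is
  nondecreasing; being periodic it is constant, and then the idle parts are the same in every
  state.\<close>
definition idle_succ :: "nat \<Rightarrow> nat \<Rightarrow> nat" where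
  "idle_succ t p = the (card_succ (w t) p)"

definition idle_weight :: "nat \<Rightarrow> nat" where
  "idle_weight t = (\<Sum>p\<in>{live_count t..<length (state t)}. state t ! p)"

context
  fixes t :: nat
begin

lemma idle_succ:
  assumes "live_count t \<le> p" "p < length (state t)"
  shows "card_succ (w t) p = Some (idle_succ t p)"
    "idle_succ t p \<in> {live_count (Suc t)..<length (state (Suc t))}"
    "state t ! p \<le> state (Suc t) ! idle_succ t p"
proof -
  have "\<not> lands w t p" using lands_iff_less_live_count assms by simp
  then obtain p' where s: "card_succ (w t) p = Some p'" and p': "p' < length (state (Suc t))"
    "state t ! p \<le> state (Suc t) ! p'" "\<not> lands w (Suc t) p'"
    using not_lands_step[OF assms(2)] by blast
  have "idle_succ t p = p'" using s by (simp add: idle_succ_def)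
  moreover have "live_count (Suc t) \<le> p'" using lands_iff_less_live_count[OF p'(1)] p'(3) by simp
  ultimately show "card_succ (w t) p = Some (idle_succ t p)"
    "idle_succ t p \<in> {live_count (Suc t)..<length (state (Suc t))}"
    "state t ! p \<le> state (Suc t) ! idle_succ t p"
    using s p' by simp_all
qed

lemma idle_succ_strict_mono:
  assumes "live_count t \<le> p1" "p1 < p2" "p2 < length (state t)"
  shows "idle_succ t p1 < idle_succ t p2"
proof -
  have "card_succ (w t) p1 = Some (idle_succ t p1)" "card_succ (w t) p2 = Some (idle_succ t p2)"
    using idle_succ(1) assms by simp_all
  then show ?thesis using card_succ_strict_mono assms(2,3) by blast
qed

lemma inj_on_idle_succ: "inj_on (idle_succ t) {live_count t..<length (state t)}"
proof (rule inj_onI)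
  fix x y assume xy: "x \<in> {live_count t..<length (state t)}" "y \<in> {live_count t..<length (state t)}"
    "idle_succ t x = idle_succ t y"
  show "x = y"
  proof (rule ccontr)
    assume "x \<noteq> y"
    then consider "x < y" | "y < x" by linarith
    then show False
    proof cases
      case 1
      then show False using idle_succ_strict_mono[of x y] xy by simp
    next
      case 2
      then show False using idle_succ_strict_mono[of y x] xy by simp
    qed
  qed
qed

lemma sum_idle_succ_image:
  "(\<Sum>p'\<in>idle_succ t ` {live_count t..<length (state t)}. state (Suc t) ! p') =
     (\<Sum>p\<in>{live_count t..<length (state t)}. state (Suc t) ! idle_succ t p)"
  by (simp add: sum.reindex[OF inj_on_idle_succ])

lemma idle_weight_le_image:
  "idle_weight t \<le> (\<Sum>p\<in>{live_count t..<length (state t)}. state (Suc t) ! idle_succ t p)"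
  unfolding idle_weight_def by (rule sum_mono) (use idle_succ(3) in auto)

lemma idle_weight_split:
  "idle_weight (Suc t) =
     (\<Sum>p\<in>{live_count t..<length (state t)}. state (Suc t) ! idle_succ t p) +
     (\<Sum>p'\<in>{live_count (Suc t)..<length (state (Suc t))} - idle_succ t ` {live_count t..<length (state t)}.
        state (Suc t) ! p')"
proof -
  have "idle_succ t ` {live_count t..<length (state t)} \<subseteq> {live_count (Suc t)..<length (state (Suc t))}"
    using idle_succ(2) by auto
  from sum.subset_diff[OF this, of "\<lambda>p'. state (Suc t) ! p'"] show ?thesis
    unfolding idle_weight_def sum_idle_succ_image by (simp add: add.commute)
qed

lemma idle_weight_mono: "idle_weight t \<le> idle_weight (Suc t)"
  using idle_weight_le_image idle_weight_split by linarith

lemma idle_weight_eq: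
  assumes eq: "idle_weight (Suc t) = idle_weight t"
  shows "idle_succ t ` {live_count t..<length (state t)} = {live_count (Suc t)..<length (state (Suc t))}"
    "\<And>p. p \<in> {live_count t..<length (state t)} \<Longrightarrow> state (Suc t) ! idle_succ t p = state t ! p"
proof -
  let ?I = "{live_count t..<length (state t)}" and ?I' = "{live_count (Suc t)..<length (state (Suc t))}"
  have image: "(\<Sum>p\<in>?I. state (Suc t) ! idle_succ t p) = idle_weight t"
    and rest: "(\<Sum>p'\<in>?I' - idle_succ t ` ?I. state (Suc t) ! p') = 0"
    using idle_weight_le_image idle_weight_split eq by linarith+
  show "idle_succ t ` ?I = ?I'"
  proof (rule ccontr)
    assume "idle_succ t ` ?I \<noteq> ?I'"
    moreover have "idle_succ t ` ?I \<subseteq> ?I'" using idle_succ(2) by auto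
    ultimately obtain x where x: "x \<in> ?I'" "x \<notin> idle_succ t ` ?I" by blast
    have "state (Suc t) ! x \<le> (\<Sum>p'\<in>?I' - idle_succ t ` ?I. state (Suc t) ! p')"
      by (rule member_le_sum) (use x in auto)
    moreover have "0 < state (Suc t) ! x" using state_pos x(1) by simp
    ultimately show False using rest by linarith
  qed
  fix p assume p: "p \<in> ?I"
  from image have "(\<Sum>p\<in>?I. state t ! p) = (\<Sum>p\<in>?I. state (Suc t) ! idle_succ t p)"
    by (simp add: idle_weight_def)
  then show "state (Suc t) ! idle_succ t p = state t ! p"
    by (rule sum_mono_inv[symmetric]) (use idle_succ(3) p in auto)
qed

end

lemma idle_weight_const: "idle_weight (Suc t) = idle_weight t"
proof -
  have "idle_weight t' \<le> idle_weight (t' + k)" for t' k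
    by (induction k) (auto intro: order_trans idle_weight_mono)
  from this[of "Suc t" "n - 1"] have "idle_weight (Suc t) \<le> idle_weight (t + n)"
    using period_pos by simp
  also have "\<dots> = idle_weight t" unfolding idle_weight_def using state_periodic live_count_periodic by simp
  finally show ?thesis using idle_weight_mono[of t] by simp
qed

lemma idle_succ_eq:
  shows "length (state (Suc t)) - live_count (Suc t) = length (state t) - live_count t"
    "\<And>p. live_count t \<le> p \<Longrightarrow> p < length (state t) \<Longrightarrow> idle_succ t p = p - live_count t + live_count (Suc t)"
proof -
  note eq = idle_weight_eq[OF idle_weight_const]
  have "sorted_wrt (<) (map (idle_succ t) [live_count t..<length (state t)])"
    unfolding sorted_wrt_map by (rule sorted_wrt_mono_rel[of _ "(<)"]) (auto intro: idle_succ_strict_mono)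
  then have "sorted_list_of_set {live_count (Suc t)..<length (state (Suc t))} =
      map (idle_succ t) [live_count t..<length (state t)]"
    using eq(1) by (intro sorted_list_of_set_eqI) auto
  then have ml: "map (idle_succ t) [live_count t..<length (state t)] = [live_count (Suc t)..<length (state (Suc t))]"
    by simp
  from arg_cong[OF ml, of length]
  show len: "length (state (Suc t)) - live_count (Suc t) = length (state t) - live_count t" by simp
  fix p assume p: "live_count t \<le> p" "p < length (state t)"
  then show "idle_succ t p = p - live_count t + live_count (Suc t)"
    using arg_cong[OF ml, of "\<lambda>xs. xs ! (p - live_count t)"] len by simp
qed

definition idle_parts :: "nat \<Rightarrow> nat list" where
  "idle_parts t = drop (live_count t) (state t)"

lemma idle_parts_Suc: "idle_parts (Suc t) = idle_parts t"
proof (rule nth_equalityI)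
  show "length (idle_parts (Suc t)) = length (idle_parts t)"
    unfolding idle_parts_def using idle_succ_eq(1)[of t] by simp
  fix j assume "j < length (idle_parts (Suc t))"
  then have j: "j < length (state t) - live_count t"
    unfolding idle_parts_def using idle_succ_eq(1)[of t] by simp
  then have p: "live_count t + j \<in> {live_count t..<length (state t)}" by simp
  have "idle_parts (Suc t) ! j = state (Suc t) ! (live_count (Suc t) + j)"
    unfolding idle_parts_def using live_count_le[of "Suc t"] by simp
  also have "\<dots> = state (Suc t) ! idle_succ t (live_count t + j)"
    using idle_succ_eq(2)[of t "live_count t + j"] p by (simp add: add.commute)
  also have "\<dots> = state t ! (live_count t + j)" using idle_weight_eq(2)[OF idle_weight_const p] .
  also have "\<dots> = idle_parts t ! j" unfolding idle_parts_def using live_count_le[of t] by simp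
  finally show "idle_parts (Suc t) ! j = idle_parts t ! j" .
qed

lemma idle_parts_const: "idle_parts t = idle_parts 0"
  by (induction t) (simp_all add: idle_parts_Suc)

lemma card_succ_idle:
  "live_count t \<le> p \<Longrightarrow> p < length (state t) \<Longrightarrow> card_succ (w t) p = Some (p - live_count t + live_count (Suc t))"
  using idle_succ(1) idle_succ_eq(2) by simp

end

section \<open>The landing profile of a periodic card sequence\<close>

context periodic_card_seq
begin

definition lag_bound :: nat where
  "lag_bound = (\<Sum>t<n. \<Sum>p<length (state t). Suc (landing_time w t p))"

lemma landing_time_lt_lag_bound:
  assumes "p < live_count t"
  shows "landing_time w t p < lag_bound"
proof -
  let ?s = "t mod n"
  have s: "?s < n" using period_pos by simp
  have "landing_time w t p = landing_time w ?s p" "live_count t = live_count ?s"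
    using periodic_mod[of "\<lambda>t. landing_time w t p" n t] periodic_mod[of live_count n t]
      landing_time_periodic live_count_periodic by simp_all
  moreover have "p < length (state ?s)"
    using assms live_count_le[of ?s] calculation(2) by simp
  then have "Suc (landing_time w ?s p) \<le> (\<Sum>p'<length (state ?s). Suc (landing_time w ?s p'))"
    by (intro member_le_sum) auto
  ultimately have "landing_time w t p < (\<Sum>p'<length (state ?s). Suc (landing_time w ?s p'))"
    by simp
  also have "\<dots> \<le> lag_bound" unfolding lag_bound_def by (rule member_le_sum) (use s in auto)
  finally show ?thesis .
qed

lemma landing_time_strict_mono:
  "p1 < p2 \<Longrightarrow> p2 < live_count t \<Longrightarrow> landing_time w t p1 < landing_time w t p2"
  using lands_before less_live_count by blast

text \<open>\<open>profile t d\<close> is the part of \<open>state t\<close> that lands after \<open>d\<close> beats; live parts land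
  at pairwise different times.\<close>
definition profile :: "nat \<Rightarrow> nat \<Rightarrow> nat" where
  "profile t d = (\<Sum>p<live_count t. if landing_time w t p = d then state t ! p else 0)"

lemma profile_landing_time:
  assumes p: "p < live_count t"
  shows "profile t (landing_time w t p) = state t ! p"
proof -
  have "landing_time w t p' = landing_time w t p \<longleftrightarrow> p' = p" if "p' < live_count t" for p'
    using that p landing_time_strict_mono[of p' p t] landing_time_strict_mono[of p p' t]
    by (cases "p' < p") (auto simp: not_less le_less)
  then have "profile t (landing_time w t p) = (\<Sum>p'<live_count t. if p' = p then state t ! p' else 0)"
    unfolding profile_def by (intro sum.cong) auto
  then show ?thesis using p by simp
qed

lemma profile_pos_iff: "0 < profile t d \<longleftrightarrow> (\<exists>p<live_count t. landing_time w t p = d)"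
proof
  assume pos: "0 < profile t d"
  show "\<exists>p<live_count t. landing_time w t p = d"
  proof (rule ccontr)
    assume "\<not> (\<exists>p<live_count t. landing_time w t p = d)"
    then have "profile t d = 0" unfolding profile_def by (intro sum.neutral) auto
    with pos show False by simp
  qed
next
  assume "\<exists>p<live_count t. landing_time w t p = d"
  then obtain p where p: "p < live_count t" "landing_time w t p = d" by blast
  then show "0 < profile t d" using profile_landing_time[OF p(1)] state_pos less_live_count[OF p(1)] by simp
qed

lemma profile_lag_bounded: "lag_bounded lag_bound profile"
  unfolding lag_bounded_def
proof (intro allI impI)
  fix t d assume "lag_bound \<le> d"
  then have "landing_time w t p \<noteq> d" if "p < live_count t" for p
    using landing_time_lt_lag_bound[OF that] by simp
  then show "profile t d = 0" unfolding profile_def by (intro sum.neutral) auto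
qed

lemma profile_finite_support: "finite {d. 0 < profile t d}"
  by (rule lag_bounded_finite_support[OF profile_lag_bounded])

lemma profile_periodic: "profile (t + n) = profile t"
  by (intro ext) (simp only: profile_def live_count_periodic landing_time_periodic state_periodic)

lemma support_list_profile: "support_list (profile t) = map (landing_time w t) [0..<live_count t]"
proof (rule support_list_eqI[OF profile_finite_support])
  show "sorted_wrt (<) (map (landing_time w t) [0..<live_count t])"
    unfolding sorted_wrt_map by (rule sorted_wrt_mono_rel[of _ "(<)"]) (auto intro: landing_time_strict_mono)
  show "set (map (landing_time w t) [0..<live_count t]) = {d. 0 < profile t d}"
    using profile_pos_iff by auto
qed

lemma length_support_list_profile: "length (support_list (profile t)) = live_count t"
  by (simp add: support_list_profile)

lemma support_values_profile: "support_values (profile t) = take (live_count t) (state t)"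
proof (rule nth_equalityI)
  show "length (support_values (profile t)) = length (take (live_count t) (state t))"
    using live_count_le[of t] by (simp add: length_support_list_profile)
  fix j assume "j < length (support_values (profile t))"
  then have j: "j < live_count t" by (simp add: length_support_list_profile)
  then show "support_values (profile t) ! j = take (live_count t) (state t) ! j"
    using profile_landing_time[OF j] by (simp add: support_values_def support_list_profile)
qed

lemma state_eq: "state t = support_values (profile t) @ idle_parts 0"
proof -
  have "state t = take (live_count t) (state t) @ idle_parts t" by (simp add: idle_parts_def)
  then show ?thesis using idle_parts_const[of t] by (simp add: support_values_profile)
qed

definition live_weight :: nat where
  "live_weight = b - sum_list (idle_parts 0)"

lemma sum_profile: "(\<Sum>d<lag_bound. profile t d) = live_weight"
proof -
  have "(\<Sum>d<lag_bound. profile t d) = sum_list (support_values (profile t))"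
    using sum_support_values[OF profile_finite_support, of lag_bound] profile_lag_bounded
    by (simp add: lag_bounded_def)
  moreover have "sum_list (state t) = b" using state_ord_parts[of t] unfolding ord_parts_def by simp
  ultimately show ?thesis using state_eq[of t] unfolding live_weight_def by simp
qed

lemma live_weight_le: "live_weight \<le> b"
  unfolding live_weight_def by simp

lemma idle_parts_ord_parts: "idle_parts 0 \<in> ord_parts (b - live_weight)"
proof -
  have "sum_list (state 0) = b" "\<forall>x\<in>set (state 0). 0 < x"
    using state_ord_parts[of 0] unfolding ord_parts_def by auto
  then show ?thesis
    using state_eq[of 0] unfolding live_weight_def ord_parts_def by (auto simp: diff_diff_cancel)
qed

lemma profile_step_le: "profile t (Suc d) \<le> profile (Suc t) d"
proof (cases "0 < profile t (Suc d)")
  case True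
  then obtain p where p: "p < live_count t" "landing_time w t p = Suc d" using profile_pos_iff by blast
  then have lands: "lands w t p" "p < length (state t)" using less_live_count by auto
  obtain p' where p': "p' < length (state (Suc t))" "state t ! p \<le> state (Suc t) ! p'"
    "lands w (Suc t) p'" "landing_time w (Suc t) p' = d"
    using landing_time_Suc[OF lands(2,1) p(2)] by blast
  have "p' < live_count (Suc t)" using lands_iff_less_live_count p'(1,3) by simp
  then show ?thesis using profile_landing_time[OF p(1)] profile_landing_time p p' by metis
qed simp

lemma profile_0_pos_iff: "0 < profile t 0 \<longleftrightarrow> is_throw (w t)"
proof
  assume "0 < profile t 0"
  then obtain p where "p < live_count t" "landing_time w t p = 0" using profile_pos_iff by blast
  then show "is_throw (w t)" using landing_time_0_iff less_live_count by blast
next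
  assume throw: "is_throw (w t)"
  then obtain q r "is" where "w t = Throw q r is" by (cases "w t") (auto simp: is_throw_def)
  then have "0 < length (state t)" using Throw_card by auto
  moreover have "lands w t 0 \<and> landing_time w t 0 = 0" using landing_time_0_iff throw by blast
  ultimately show "0 < profile t 0" using profile_pos_iff lands_iff_less_live_count by blast
qed

lemma profile_Trivial:
  assumes zero: "profile t 0 = 0"
  shows "profile (Suc t) d = profile t (Suc d)"
proof -
  obtain q where wt: "w t = Trivial q"
    using profile_0_pos_iff[of t] zero by (cases "w t") (auto simp: is_throw_def)
  then have state: "state (Suc t) = state t" using Trivial_state by simp
  have lands: "lands w (Suc t) p \<longleftrightarrow> lands w t p" for p
    unfolding lands_def using wt by (metis not0_implies_Suc option.simps(5) card_succ.simps(1) track.simps)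
  have live: "live_count (Suc t) = live_count t" unfolding live_count_def using state lands by simp
  have shift: "landing_time w (Suc t) p = d \<longleftrightarrow> landing_time w t p = Suc d"
    if p: "p < live_count t" for p
  proof -
    have lp: "lands w t p" "p < length (state t)" using less_live_count[OF p] by auto
    have "landing_time w t p \<noteq> 0" using landing_time_0_iff[of t p] lp wt by (simp add: is_throw_def)
    then obtain d' where d': "landing_time w t p = Suc d'" by (cases "landing_time w t p") auto
    obtain p' where "card_succ (w t) p = Some p'" "landing_time w (Suc t) p' = d'"
      using landing_time_Suc[OF lp(2,1) d'] by blast
    then show ?thesis using wt d' by auto
  qed
  show ?thesis unfolding profile_def live state by (intro sum.cong refl) (simp add: shift)
qed

lemma profile_state_step: "state_step (profile t) (profile (Suc t))"
  unfolding state_step_def using profile_finite_support profile_step_le profile_Trivial by blast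

definition throws :: "nat \<Rightarrow> nat multiset" where
  "throws t = (\<Sum>d<lag_bound. replicate_mset (profile (Suc t) d - profile t (Suc d)) (Suc d))"

lemma count_throws_Suc: "count (throws t) (Suc d) = profile (Suc t) d - profile t (Suc d)"
proof (cases "d < lag_bound")
  case True
  then show ?thesis by (simp add: throws_def count_sum sum.delta)
next
  case False
  then show ?thesis using profile_lag_bounded by (simp add: throws_def count_sum lag_bounded_def)
qed

lemma profile_juggling_schedule: "juggling_schedule n profile throws"
proof -
  have "count (throws t) 0 = 0" for t by (simp add: throws_def count_sum)
  then have "landing_schedule n profile throws"
    unfolding landing_schedule_def using count_throws_Suc profile_step_le profile_periodic
    by (simp add: not_in_iff)
  moreover have "profile t 0 = size (throws t)" for t
  proof -
    have "size (throws t) = (\<Sum>d<lag_bound. profile (Suc t) d) - (\<Sum>d<lag_bound. profile t (Suc d))"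
      by (simp add: throws_def sum_subtractf_nat profile_step_le)
    moreover have "(\<Sum>d<lag_bound. profile t (Suc d)) + profile t 0 = (\<Sum>d<lag_bound. profile t d)"
      using sum_lessThan_shift_vanishing[of "profile t" lag_bound] profile_lag_bounded
      by (simp add: lag_bounded_def)
    ultimately show ?thesis using sum_profile[of t] sum_profile[of "Suc t"] by linarith
  qed
  moreover have "throws (t + n) = throws t" for t
    unfolding throws_def using profile_periodic[of t] profile_periodic[of "Suc t"] by simp
  ultimately show ?thesis unfolding juggling_schedule_def using profile_lag_bounded by blast
qed

lemma Throw_targets:
  assumes wt: "w t = Throw q r is"
  shows "is = map (throw_target (profile t) (profile (Suc t))) [1..<live_count t + length (idle_parts 0)]"
proof (rule nth_equalityI)
  note emb = Throw_card[OF wt]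
  have len: "live_count t + length (idle_parts 0) = length (state t)"
    using state_eq[of t] by (simp add: length_support_list_profile)
  then show "length is = length (map (throw_target (profile t) (profile (Suc t))) [1..<live_count t + length (idle_parts 0)])"
    using emb(1,4) by simp
  fix j assume j: "j < length is"
  then have pq: "Suc j < length (state t)" using emb(1,4) by simp
  have succ: "card_succ (w t) (Suc j) = Some (is ! j - 1)" using wt by simp
  have "1 \<le> is ! j" using emb(6)[OF j] by simp
  moreover have "is ! j - 1 = throw_target (profile t) (profile (Suc t)) (Suc j) - 1"
  proof (cases "Suc j < live_count t")
    case True
    then have lp: "lands w t (Suc j)" using less_live_count by blast
    have "landing_time w t (Suc j) \<noteq> 0" using landing_time_0_iff[of t "Suc j"] lp by simp
    then obtain d where d: "landing_time w t (Suc j) = Suc d" by (cases "landing_time w t (Suc j)") auto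
    obtain p' where p': "card_succ (w t) (Suc j) = Some p'" "p' < length (state (Suc t))"
      "lands w (Suc t) p'" "landing_time w (Suc t) p' = d"
      using landing_time_Suc[OF pq lp d] by blast
    have p'l: "p' < live_count (Suc t)" using lands_iff_less_live_count p'(2,3) by simp
    then have "support_rank (profile (Suc t)) d = p'"
      using support_rank_nth[OF profile_finite_support, of p' "Suc t"] p'(4)
      by (simp add: support_list_profile length_support_list_profile)
    then show ?thesis
      using True d p'(1) succ by (simp add: throw_target_def support_list_profile length_support_list_profile)
  next
    case False
    then show ?thesis
      using card_succ_idle[of t "Suc j"] pq succ by (simp add: throw_target_def length_support_list_profile)
  qed
  ultimately show "is ! j = map (throw_target (profile t) (profile (Suc t))) [1..<live_count t + length (idle_parts 0)] ! j"
    using j len emb(1,4) by (simp add: throw_target_def split: if_splits)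
qed

lemma profile_realizes: "realizes w profile (idle_parts 0)"
  unfolding realizes_def
proof (intro allI conjI)
  fix t
  show "state_step (profile t) (profile (Suc t))" by (rule profile_state_step)
  show "w t = transition_card (profile t) (profile (Suc t)) (idle_parts 0)"
  proof (cases "w t")
    case (Trivial q)
    then have "profile t 0 = 0" using profile_0_pos_iff[of t] by (simp add: is_throw_def)
    then show ?thesis unfolding transition_card_def using Trivial state_eq[of t] by simp
  next
    case (Throw q r "is")
    then have "profile t 0 \<noteq> 0" using profile_0_pos_iff[of t] by (simp add: is_throw_def)
    then show ?thesis
      unfolding transition_card_def using Throw Throw_card[OF Throw] Throw_targets[OF Throw]
        state_eq[of t] state_eq[of "Suc t"]
      by (simp add: length_support_list_profile)
  qed
qed

end

section \<open>Counting periodic card sequences\<close>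

lemma juggling_schedule_state_step:
  assumes sched: "juggling_schedule n l m" and K: "lag_bounded K l"
  shows "state_step (l t) (l (Suc t))"
proof -
  have step: "l (Suc t) d = l t (Suc d) + count (m t) (Suc d)" for d
    using sched unfolding juggling_schedule_def by (blast intro: landing_step)
  have lands: "l t 0 = size (m t)" using sched unfolding juggling_schedule_def by blast
  have "finite {d. 0 < l t d}" "finite {d. 0 < l (Suc t) d}"
    using lag_bounded_finite_support[OF K] by blast+
  moreover have "l t (Suc d) \<le> l (Suc t) d" for d using step[of d] by simp
  moreover have "l (Suc t) d = l t (Suc d)" if "l t 0 = 0" for d using step[of d] lands that by simp
  ultimately show ?thesis unfolding state_step_def by blast
qed

definition siteswap_card_seq :: "nat \<Rightarrow> (nat \<Rightarrow> nat multiset) \<Rightarrow> nat list \<Rightarrow> nat \<Rightarrow> card" where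
  "siteswap_card_seq n M e t = transition_card (siteswap_schedule n M t) (siteswap_schedule n M (Suc t)) e"

definition siteswaps_with_balls :: "nat \<Rightarrow> nat \<Rightarrow> (nat \<Rightarrow> nat multiset) set" where
  "siteswaps_with_balls n i = {M \<in> multiplex_siteswaps n. num_balls n M = real i}"

definition siteswap_idle_pairs :: "nat \<Rightarrow> nat \<Rightarrow> ((nat \<Rightarrow> nat multiset) \<times> nat list) set" where
  "siteswap_idle_pairs b n = (\<Union>i\<le>b. siteswaps_with_balls n i \<times> ord_parts (b - i))"

context
  fixes n :: nat
  assumes n: "n \<ge> 1"
begin

lemma siteswap_card_seq_realizes:
  "M \<in> multiplex_siteswaps n \<Longrightarrow> realizes (siteswap_card_seq n M e) (siteswap_schedule n M) e"
  unfolding realizes_def siteswap_card_seq_def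
  using juggling_schedule_state_step[OF siteswap_juggling_schedule siteswap_lag_bounded] n by blast

lemma siteswap_card_seq_periodic:
  assumes "(M, e) \<in> siteswap_idle_pairs b n"
  shows "siteswap_card_seq n M e \<in> periodic_card_seqs b n"
proof -
  obtain i where i: "i \<le> b" "M \<in> multiplex_siteswaps n" "num_balls n M = real i" "e \<in> ord_parts (b - i)"
    using assms unfolding siteswap_idle_pairs_def siteswaps_with_balls_def by auto
  let ?l = "siteswap_schedule n M" and ?K = "n * throw_height_sum n M"
  note sched = siteswap_juggling_schedule[OF n i(2)] and K = siteswap_lag_bounded[OF n i(2)]
  have step: "state_step (?l t) (?l (Suc t))" for t by (rule juggling_schedule_state_step[OF sched K])
  have "sum_list (support_values (?l t)) = i" for t
  proof -
    have "sum_list (support_values (?l t)) = (\<Sum>d<?K. ?l t d)"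
      using sum_support_values[of "?l t" ?K] step K unfolding state_step_def lag_bounded_def by blast
    also have "\<dots> = (\<Sum>d<?K. ?l 0 d)"
      using sched K unfolding juggling_schedule_def by (blast intro: juggling_ball_count)
    also have "\<dots> = i"
    proof -
      have "real (\<Sum>d<?K. ?l 0 d) = real i" using num_balls_siteswap[OF n i(2) K] i(3) by simp
      then show ?thesis by (simp only: of_nat_eq_iff)
    qed
    finally show ?thesis .
  qed
  then have "siteswap_card_seq n M e t \<in> cards b" for t
    unfolding siteswap_card_seq_def using transition_card_in_cards[OF step] i(1,4) by blast
  moreover have "right_part (siteswap_card_seq n M e t) = left_part (siteswap_card_seq n M e (Suc t))" for t
    unfolding siteswap_card_seq_def using right_part_transition_card[OF step] left_part_transition_card by simp
  moreover have "siteswap_card_seq n M e (t + n) = siteswap_card_seq n M e t" for t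
    using landing_periodic[OF siteswap_landing_schedule[OF n i(2)]]
    by (simp add: siteswap_card_seq_def add_Suc[symmetric] del: add_Suc)
  ultimately show ?thesis unfolding periodic_card_seqs_def by blast
qed

lemma inj_on_siteswap_card_seq: "inj_on (\<lambda>(M, e). siteswap_card_seq n M e) (siteswap_idle_pairs b n)"
proof (rule inj_onI, clarify)
  fix M e M' e'
  assume "(M, e) \<in> siteswap_idle_pairs b n" "(M', e') \<in> siteswap_idle_pairs b n"
    and eq: "siteswap_card_seq n M e = siteswap_card_seq n M' e'"
  then have M: "M \<in> multiplex_siteswaps n" "M' \<in> multiplex_siteswaps n"
    unfolding siteswap_idle_pairs_def siteswaps_with_balls_def by auto
  have "realizes (siteswap_card_seq n M e) (siteswap_schedule n M') e'"
    using siteswap_card_seq_realizes[OF M(2), of e'] eq by simp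
  then have same: "siteswap_schedule n M = siteswap_schedule n M' \<and> e = e'"
    by (rule realizes_unique[OF siteswap_card_seq_realizes[OF M(1)]])
  then have "cyclic_throws n M = cyclic_throws n M'"
    using landing_schedule_throws_unique siteswap_landing_schedule[OF n M(1)] siteswap_landing_schedule[OF n M(2)]
    by metis
  then show "M = M' \<and> e = e'" using cyclic_throws_inj[OF M] same by simp
qed

lemma periodic_card_seq_in_image:
  assumes w: "w \<in> periodic_card_seqs b n"
  shows "w \<in> (\<lambda>(M, e). siteswap_card_seq n M e) ` siteswap_idle_pairs b n"
proof -
  interpret periodic_card_seq b n w using w n by unfold_locales
  define M where "M = (\<lambda>t. if t < n then throws t else {#})"
  note siteswap = juggling_schedule_siteswap[OF n profile_juggling_schedule profile_lag_bounded]
  have M: "M \<in> multiplex_siteswaps n" "cyclic_throws n M = throws" "num_balls n M = real live_weight"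
    using siteswap sum_profile[of 0] unfolding M_def by auto
  have "siteswap_schedule n M = profile"
  proof (rule landing_schedule_unique[OF n])
    show "landing_schedule n (siteswap_schedule n M) throws"
      using siteswap_landing_schedule[OF n M(1)] M(2) by simp
    show "landing_schedule n profile throws"
      using profile_juggling_schedule unfolding juggling_schedule_def by blast
    show "lag_bounded (max lag_bound (n * throw_height_sum n M)) (siteswap_schedule n M)"
      using siteswap_lag_bounded[OF n M(1)] by (rule lag_bounded_mono) simp
    show "lag_bounded (max lag_bound (n * throw_height_sum n M)) profile"
      using profile_lag_bounded by (rule lag_bounded_mono) simp
  qed
  then have "siteswap_card_seq n M (idle_parts 0) = w"
    using profile_realizes unfolding siteswap_card_seq_def realizes_def by auto
  moreover have "(M, idle_parts 0) \<in> siteswap_idle_pairs b n"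
    using M(1,3) live_weight_le idle_parts_ord_parts
    unfolding siteswap_idle_pairs_def siteswaps_with_balls_def by blast
  ultimately show ?thesis by force
qed

lemma card_periodic_card_seqs_eq_ss:
  "card (periodic_card_seqs b n) = (\<Sum>i\<le>b. ss i n * card (ord_parts (b - i)))"
proof -
  have "bij_betw (\<lambda>(M, e). siteswap_card_seq n M e) (siteswap_idle_pairs b n) (periodic_card_seqs b n)"
    unfolding bij_betw_def
    using inj_on_siteswap_card_seq siteswap_card_seq_periodic periodic_card_seq_in_image by auto
  then have same: "card (siteswap_idle_pairs b n) = card (periodic_card_seqs b n)"
    and fin: "finite (siteswap_idle_pairs b n)"
    using bij_betw_same_card bij_betw_finite finite_periodic_card_seqs[OF n] by blast+
  have "finite (siteswaps_with_balls n i)" if "i \<le> b" for i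
  proof -
    have "siteswaps_with_balls n i \<times> ord_parts (b - i) \<subseteq> siteswap_idle_pairs b n"
      unfolding siteswap_idle_pairs_def using that by blast
    then have "finite (siteswaps_with_balls n i \<times> ord_parts (b - i))" using fin by (rule finite_subset)
    with ord_parts_nonempty[of "b - i"] show ?thesis by (auto simp: finite_cartesian_product_iff)
  qed
  then have "card (siteswap_idle_pairs b n) = (\<Sum>i\<le>b. card (siteswaps_with_balls n i \<times> ord_parts (b - i)))"
    unfolding siteswap_idle_pairs_def
    by (intro card_UN_disjoint) (auto simp: finite_ord_parts siteswaps_with_balls_def)
  also have "\<dots> = (\<Sum>i\<le>b. ss i n * card (ord_parts (b - i)))"
    by (simp add: card_cartesian_product ss_def siteswaps_with_balls_def)
  finally show ?thesis using same by simp
qed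

end

theorem theorem7:
  fixes b n :: nat
  assumes "n \<ge> 1"
  shows "int (ss b n) = mat_trace (A_mat b ^\<^sub>m n) - (\<Sum>i<b. mat_trace (A_mat i ^\<^sub>m n))"
proof -
  define c where "c m = card (ord_parts m)" for m
  have trace: "mat_trace (A_mat i ^\<^sub>m n) = int (\<Sum>j\<le>i. ss j n * c (i - j))" for i
    using trace_A_mat_power[of i n] card_periodic_card_seqs[OF assms, of i]
      card_periodic_card_seqs_eq_ss[OF assms, of i]
    by (simp add: c_def)
  have "(\<Sum>i<b. mat_trace (A_mat i ^\<^sub>m n)) = int (\<Sum>i<b. \<Sum>j\<le>i. ss j n * c (i - j))"
    by (simp add: trace)
  also have "\<dots> = int (\<Sum>j<b. ss j n * c (b - j))"
    using sum_convolution_collapse[of c] card_ord_parts_eq_sum by (simp add: c_def)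
  finally have "(\<Sum>i<b. mat_trace (A_mat i ^\<^sub>m n)) = int (\<Sum>j<b. ss j n * c (b - j))" .
  moreover have "c 0 = 1" by (simp add: c_def ord_parts_0)
  ultimately show ?thesis by (simp add: trace lessThan_Suc_atMost[symmetric])
qed

end
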